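(* On $\mathcal{V}_n^q$, for every $\mu\subset(k^n)$, $$(1+\beta H_1)v_\mu=\frac{\Pi(t_\mu)}{\Pi(t_\emptyset)}\sum_{(\lambda,d)}q^d\beta^{|\lambda/d/\mu|}v_\lambda,$$ where the sum runs over pairs $(\lambda,d)$ with $\lambda\subset(k^n)$, $d\in\{0,1\}$, such that $\mu[0]_i\le\lambda[d]_i$ for all $i$ and the cylindric skew diagram $\lambda/d/\mu$ contains at most one box in each column and at most one box in each row. Moreover, $$H(x|t)E(\ominus x|t)=\prod_{j=1}^n(t_j\ominus x)\prod_{j=n+1}^N(x\ominus t_j)\,(1+\beta H_1)+q\cdot 1\quad\text{on }\mathcal{V}_n^q.$$
   Context: $\beta$ indeterminate, $x\oplus y=x+y+\beta xy$, $x\ominus y=(x-y)/(1+\beta y)$, $\ominus x=-x/(1+\beta x)$, $N=n+k$. $V=\mathbb{Z}v_0\oplus\mathbb{Z}v_1$, $\sigma^-v_1=v_0,\sigma^-v_0=0,\sigma^+v_0=v_1,\sigma^+v_1=0$. $\mathcal{V}_n^q$ is the span (over formal power series in $q$ with coefficients rational in $\beta,t_1,\dots,t_N$) of the vectors $v_\lambda=v_{b_1}\otimes\cdots\otimes v_{b_N}\in V^{\otimes N}$, $\lambda\subset(k^n)$, where $b_i=1$ iff $i\in I_\lambda=\{\lambda_{n+1-i}+i:1\le i\le n\}$. For the $j$-th factor, $L_j(x)=\sum e_{ab}\otimes L_{ab}$ ($e_{ab}v_b=v_a$ on an auxiliary $V$) with $L_{00}=\sigma^+\sigma^-+(x\ominus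 t_j)\sigma^-\sigma^+$, $L_{01}=(1+\beta\,x\ominus t_j)\sigma^+$, $L_{10}=\sigma^-$, $L_{11}=\sigma^-\sigma^+$, and $L'_j(x)$ with $L'_{00}=\sigma^-\sigma^++(x\oplus t_j)\sigma^+\sigma^-$, $L'_{01}=\sigma^+$, $L'_{10}=(1+\beta\,x\oplus t_j)\sigma^-$, $L'_{11}=\sigma^+\sigma^-$. $M(x)=L_N\cdots L_1=\sum e_{ab}\otimes M_{ab}$, $A=M_{00}$, $D=M_{11}$, likewise $A',D'$ from $L'$; $H(x|t)=A+qD$, $E(x|t)=A'+qD'$. Operators $H_1,\dots,H_k$ on $\mathcal{V}_n^q$ are defined by the expansion $H(x|t)|_{\mathcal{V}_n^q}=(x|t^* )^k\cdot\mathbf{1}+(1+\beta x)\sum_{r=1}^kH_r\frac{(x|t^* )^{k-r}}{1+\beta t_{n+r}}$, where $t^*=(\ominus t_N,\dots,\ominus t_1)$ and $(x|s)^m=\prod_{i=1}^m(x\oplus s_i)$. $\Pi(t_\mu)=\prod_{i\in I_\mu}(1+\beta t_i)$, $\Pi(t_\emptyset)=\prod_{i=1}^n(1+\beta t_i)$. Cylindric loops: for $r\in\mathbb{Z}$, $\lambda[r]$ is the sequence $(\lambda[r]_i)_{i\in\mathbb{Z}}$ with $\lambda[r]_{r+i}=\lambda_i+r$ for $1\le i\le n$ and $\lambda[r]_{i+n}=\lambda[r]_i-k$. The cylindric skew diagram is $\lambda/d/\mu=\{\langle i,j\rangle\in\mathbb{Z}^2/(n,-k)\mathbb{Z}:\lambda[d]_i\ge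 j>\mu[0]_i\}$, and $|\lambda/d/\mu|$ is its number of boxes (counted modulo the shift by $(n,-k)$). *)

theory Defs
  imports Main
begin

definition oplusb :: "'a::field \<Rightarrow> 'a \<Rightarrow> 'a \<Rightarrow> 'a" where
  "oplusb \<beta> x y = x + y + \<beta> * x * y"

definition ominusb :: "'a::field \<Rightarrow> 'a \<Rightarrow> 'a \<Rightarrow> 'a" where
  "ominusb \<beta> x y = (x - y) / (1 + \<beta> * y)"

definition onegb :: "'a::field \<Rightarrow> 'a \<Rightarrow> 'a" where
  "onegb \<beta> x = - x / (1 + \<beta> * x)"

text \<open>Basis vectors of V: True = v_1, False = v_0.
  Lloc beta t x j a c s s' is the matrix element of L_{j,ac} from site state s to
  site state s' (a = auxiliary output index, c = auxiliary input index).\<close>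

definition Lloc :: "'a::field \<Rightarrow> (nat \<Rightarrow> 'a) \<Rightarrow> 'a \<Rightarrow> nat \<Rightarrow> bool \<Rightarrow> bool \<Rightarrow> bool \<Rightarrow> bool \<Rightarrow> 'a" where
  "Lloc \<beta> t x j a c s s' =
    (if \<not> a \<and> \<not> c then (if s = s' then (if s then 1 else ominusb \<beta> x (t j)) else 0)
     else if \<not> a \<and> c then (if \<not> s \<and> s' then 1 + \<beta> * ominusb \<beta> x (t j) else 0)
     else if a \<and> \<not> c then (if s \<and> \<not> s' then 1 else 0)
     else (if \<not> s \<and> \<not> s' then 1 else 0))"

definition Lloc' :: "'a::field \<Rightarrow> (nat \<Rightarrow> 'a) \<Rightarrow> 'a \<Rightarrow> nat \<Rightarrow> bool \<Rightarrow> bool \<Rightarrow> bool \<Rightarrow> bool \<Rightarrow> 'a" where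
  "Lloc' \<beta> t x j a c s s' =
    (if \<not> a \<and> \<not> c then (if s = s' then (if s then oplusb \<beta> x (t j) else 1) else 0)
     else if \<not> a \<and> c then (if \<not> s \<and> s' then 1 else 0)
     else if a \<and> \<not> c then (if s \<and> \<not> s' then 1 + \<beta> * oplusb \<beta> x (t j) else 0)
     else (if s \<and> s' then 1 else 0))"

text \<open>Quantum space basis: v_{b_1} (x) ... (x) v_{b_N} is indexed by S = {i. b_i = 1} \<subseteq> {1..N}.
  transfer loc b j c S' S = matrix element (S -> S' on sites 1..j) of (L_j ... L_1)_{c b}.\<close>

fun transfer :: "(nat \<Rightarrow> bool \<Rightarrow> bool \<Rightarrow> bool \<Rightarrow> bool \<Rightarrow> 'a::field) \<Rightarrow> bool \<Rightarrow> nat \<Rightarrow> bool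
                  \<Rightarrow> nat set \<Rightarrow> nat set \<Rightarrow> 'a" where
  "transfer loc b 0 c S' S = (if c = b then 1 else 0)"
| "transfer loc b (Suc j) c S' S =
     loc (Suc j) c False (Suc j \<in> S) (Suc j \<in> S') * transfer loc b j False S' S
   + loc (Suc j) c True (Suc j \<in> S) (Suc j \<in> S') * transfer loc b j True S' S"

definition Mono :: "(nat \<Rightarrow> bool \<Rightarrow> bool \<Rightarrow> bool \<Rightarrow> bool \<Rightarrow> 'a::field) \<Rightarrow> nat \<Rightarrow> bool \<Rightarrow> bool
                  \<Rightarrow> nat set \<Rightarrow> nat set \<Rightarrow> 'a" where
  "Mono loc N a b S' S = transfer loc b N a S' S"

text \<open>H(x|t) = A + qD and E(x|t) = A' + qD', as matrices (output index S', input index S).\<close>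

definition Hop :: "'a::field \<Rightarrow> (nat \<Rightarrow> 'a) \<Rightarrow> 'a \<Rightarrow> nat \<Rightarrow> 'a \<Rightarrow> nat set \<Rightarrow> nat set \<Rightarrow> 'a" where
  "Hop \<beta> t q N x S' S =
     Mono (Lloc \<beta> t x) N False False S' S + q * Mono (Lloc \<beta> t x) N True True S' S"

definition Eop :: "'a::field \<Rightarrow> (nat \<Rightarrow> 'a) \<Rightarrow> 'a \<Rightarrow> nat \<Rightarrow> 'a \<Rightarrow> nat set \<Rightarrow> nat set \<Rightarrow> 'a" where
  "Eop \<beta> t q N x S' S =
     Mono (Lloc' \<beta> t x) N False False S' S + q * Mono (Lloc' \<beta> t x) N True True S' S"

text \<open>Index sets of the basis vectors v_lambda, lambda \<subseteq> (k^n): the n-subsets of {1..N}.\<close>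

definition nsub :: "nat \<Rightarrow> nat \<Rightarrow> nat set set" where
  "nsub n N = {S. S \<subseteq> {1..N} \<and> card S = n}"

text \<open>(x|t^*)^m with t^* = (-t_N, ..., -t_1).\<close>

definition tpoch :: "'a::field \<Rightarrow> (nat \<Rightarrow> 'a) \<Rightarrow> nat \<Rightarrow> nat \<Rightarrow> 'a \<Rightarrow> 'a" where
  "tpoch \<beta> t N m x = (\<Prod>i\<in>{1..m}. oplusb \<beta> x (onegb \<beta> (t (N + 1 - i))))"

text \<open>The operators H_1, ..., H_k on V_n^q (as matrices on n-subsets), defined by the expansion
  of H(x|t) restricted to V_n^q.\<close>

definition Hcoef :: "'a::field \<Rightarrow> (nat \<Rightarrow> 'a) \<Rightarrow> 'a \<Rightarrow> nat \<Rightarrow> nat \<Rightarrow> nat \<Rightarrow> nat set \<Rightarrow> nat set \<Rightarrow> 'a" where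
  "Hcoef \<beta> t q n k = (THE Hs.
      (\<forall>r S' S. (r \<notin> {1..k} \<or> S \<notin> nsub n (n + k) \<or> S' \<notin> nsub n (n + k)) \<longrightarrow> Hs r S' S = 0)
    \<and> (\<forall>x. \<forall>S\<in>nsub n (n + k). \<forall>S'\<in>nsub n (n + k).
         Hop \<beta> t q (n + k) x S' S =
           (if S' = S then tpoch \<beta> t (n + k) k x else 0)
           + (1 + \<beta> * x) * (\<Sum>r\<in>{1..k}. Hs r S' S * tpoch \<beta> t (n + k) (k - r) x
                                          / (1 + \<beta> * t (n + r)))))"

definition parts :: "nat \<Rightarrow> nat \<Rightarrow> (nat \<Rightarrow> nat) set" where
  "parts n k = {la. (\<forall>i\<in>{1..n}. la i \<le> k) \<and> (\<forall>i. 1 \<le> i \<and> i < n \<longrightarrow> la (Suc i) \<le> la i)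
                  \<and> (\<forall>i. i \<notin> {1..n} \<longrightarrow> la i = 0)}"

definition Iset :: "nat \<Rightarrow> (nat \<Rightarrow> nat) \<Rightarrow> nat set" where
  "Iset n la = {la (n + 1 - i) + i | i. i \<in> {1..n}}"

definition vvec :: "nat \<Rightarrow> (nat \<Rightarrow> nat) \<Rightarrow> nat set \<Rightarrow> 'a::field" where
  "vvec n la S = (if S = Iset n la then 1 else 0)"

definition PiT :: "'a::field \<Rightarrow> (nat \<Rightarrow> 'a) \<Rightarrow> nat set \<Rightarrow> 'a" where
  "PiT \<beta> t S = (\<Prod>i\<in>S. 1 + \<beta> * t i)"

text \<open>Cylindric loop: loop n k lambda r j = lambda[r]_j (j \<in> \<int>), requires n \<ge> 1.\<close>

definition loop :: "nat \<Rightarrow> nat \<Rightarrow> (nat \<Rightarrow> nat) \<Rightarrow> int \<Rightarrow> int \<Rightarrow> int" where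
  "loop n k la r j = int (la (nat ((j - r - 1) mod int n) + 1)) + r - ((j - r - 1) div int n) * int k"

text \<open>Lift of the cylindric skew diagram lambda/d/mu to \<int>^2.\<close>

definition skew_lift :: "nat \<Rightarrow> nat \<Rightarrow> (nat \<Rightarrow> nat) \<Rightarrow> int \<Rightarrow> (nat \<Rightarrow> nat) \<Rightarrow> (int \<times> int) set" where
  "skew_lift n k la d mu = {(i, j). loop n k la d i \<ge> j \<and> j > loop n k mu 0 i}"

definition cyl_rel :: "nat \<Rightarrow> nat \<Rightarrow> ((int \<times> int) \<times> (int \<times> int)) set" where
  "cyl_rel n k = {((i, j), (i', j')). \<exists>m::int. i' = i + m * int n \<and> j' = j - m * int k}"

text \<open>|lambda/d/mu|: number of boxes modulo the shift by (n,-k).\<close>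

definition skew_size :: "nat \<Rightarrow> nat \<Rightarrow> (nat \<Rightarrow> nat) \<Rightarrow> int \<Rightarrow> (nat \<Rightarrow> nat) \<Rightarrow> nat" where
  "skew_size n k la d mu = card (skew_lift n k la d mu // cyl_rel n k)"

definition pieri_pairs :: "nat \<Rightarrow> nat \<Rightarrow> (nat \<Rightarrow> nat) \<Rightarrow> ((nat \<Rightarrow> nat) \<times> nat) set" where
  "pieri_pairs n k mu = {(la, d). la \<in> parts n k \<and> d \<in> {0, 1}
      \<and> (\<forall>i. loop n k mu 0 i \<le> loop n k la (int d) i)
      \<and> (\<forall>i j j'. (i, j) \<in> skew_lift n k la (int d) mu \<longrightarrow> (i, j') \<in> skew_lift n k la (int d) mu \<longrightarrow> j = j')
      \<and> (\<forall>i i' j. (i, j) \<in> skew_lift n k la (int d) mu \<longrightarrow> (i', j) \<in> skew_lift n k la (int d) mu \<longrightarrow> i = i')}"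

end

theory Submission
  imports Defs "HOL-Computational_Algebra.Polynomial"
begin

text \<open>Both identities are governed by one local operator, \<open>Lpieri\<close>. Composing the vertices of
  \<open>H(x|t)\<close> and \<open>E(\<ominus>x|t)\<close> site by site, the identities \<open>(x \<ominus> y)(1 + \<beta> (y \<ominus> x)) = -(y \<ominus> x)\<close> and
  \<open>(1 + \<beta> (x \<ominus> y))(1 + \<beta> (y \<ominus> x)) = 1\<close> make the product telescope to an explicit diagonal factor
  times the transfer matrix \<open>T\<close> of \<open>Lpieri\<close>, plus \<open>q\<close>. On the other hand every entry of \<open>H(x|t)\<close> is a
  polynomial of degree \<open>k\<close> in \<open>x\<close> that is divisible by \<open>1 + \<beta> x\<close> off the diagonal part; its top
  coefficient is again \<open>T\<close> up to a factor, and comparing top coefficients in the expansion defining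
  \<open>H\<^sub>r\<close> gives \<open>1 + \<beta> H\<^sub>1 = \<Pi>(t\<^sub>S)/\<Pi>(t\<^sub>\<emptyset>) T\<close>. Finally, a nonzero entry \<open>(S', S)\<close> of \<open>T\<close> moves
  every particle of \<open>S - S'\<close> one site to the right, cyclically, with weight \<open>\<beta>\<close> per moved particle.
  Lifting particle configurations periodically to \<open>\<int>\<close>, such moves are exactly the Pieri pairs
  \<open>(\<lambda>, d)\<close>: the moved particles are the boxes of \<open>\<lambda>/d/\<mu>\<close>, and \<open>d\<close> records the winding past site \<open>N\<close>.\<close>

lemma oplusb_commute: "oplusb \<beta> x y = oplusb \<beta> y x"
  by (simp add: oplusb_def algebra_simps)

lemma oplusb_onegb:
  fixes \<beta> :: "'a::field"
  assumes "1 + \<beta> * y \<noteq> 0"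
  shows "oplusb \<beta> x (onegb \<beta> y) = ominusb \<beta> x y"
  using assms unfolding oplusb_def onegb_def ominusb_def
  by (simp add: divide_simps) (simp add: algebra_simps)

lemma ominusb_mult_swap:
  fixes \<beta> :: "'a::field"
  assumes "1 + \<beta> * x \<noteq> 0" "1 + \<beta> * y \<noteq> 0"
  shows "ominusb \<beta> x y * (1 + \<beta> * ominusb \<beta> y x) = - ominusb \<beta> y x"
  using assms unfolding ominusb_def
  by (simp add: divide_simps) (simp add: algebra_simps)

lemma one_plus_ominusb_mult_swap:
  fixes \<beta> :: "'a::field"
  assumes "1 + \<beta> * x \<noteq> 0" "1 + \<beta> * y \<noteq> 0"
  shows "(1 + \<beta> * ominusb \<beta> x y) * (1 + \<beta> * ominusb \<beta> y x) = 1"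
  using assms unfolding ominusb_def
  by (simp add: divide_simps) (simp add: algebra_simps)

lemma Lloc_simps:
  "Lloc \<beta> t x j False False s s' = (if s = s' then (if s then 1 else ominusb \<beta> x (t j)) else 0)"
  "Lloc \<beta> t x j False True s s' = (if \<not> s \<and> s' then 1 + \<beta> * ominusb \<beta> x (t j) else 0)"
  "Lloc \<beta> t x j True False s s' = (if s \<and> \<not> s' then 1 else 0)"
  "Lloc \<beta> t x j True True s s' = (if \<not> s \<and> \<not> s' then 1 else 0)"
  by (simp_all add: Lloc_def)

lemma Lloc'_simps:
  "Lloc' \<beta> t x j False False s s' = (if s = s' then (if s then oplusb \<beta> x (t j) else 1) else 0)"
  "Lloc' \<beta> t x j False True s s' = (if \<not> s \<and> s' then 1 else 0)"
  "Lloc' \<beta> t x j True False s s' = (if s \<and> \<not> s' then 1 + \<beta> * oplusb \<beta> x (t j) else 0)"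
  "Lloc' \<beta> t x j True True s s' = (if s \<and> s' then 1 else 0)"
  by (simp_all add: Lloc'_def)

lemma transfer_cong:
  assumes "\<forall>i\<in>{1..j}. (i \<in> S' \<longleftrightarrow> i \<in> T') \<and> (i \<in> S \<longleftrightarrow> i \<in> T)"
  shows "transfer loc b j c S' S = transfer loc b j c T' T"
  using assms by (induction j arbitrary: c) auto

lemma transfer_nonzero_imp_card_eq:
  assumes conserve: "\<And>j a c s s'. loc j a c s s' \<noteq> 0 \<Longrightarrow> (of_bool c + of_bool s :: nat) = of_bool a + of_bool s'"
  shows "transfer loc b j c S' S \<noteq> 0 \<Longrightarrow> of_bool b + card (S \<inter> {1..j}) = of_bool c + card (S' \<inter> {1..j})"
proof (induction j arbitrary: c)
  case 0
  then show ?case by (auto split: if_splits)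
next
  case (Suc j)
  have card_Suc: "card (A \<inter> {1..Suc j}) = card (A \<inter> {1..j}) + of_bool (Suc j \<in> A)" for A :: "nat set"
  proof -
    have "A \<inter> {1..Suc j} = (if Suc j \<in> A then insert (Suc j) (A \<inter> {1..j}) else A \<inter> {1..j})"
      by (auto simp: atLeastAtMostSuc_conv)
    then show ?thesis by auto
  qed
  from Suc.prems have "(loc (Suc j) c False (Suc j \<in> S) (Suc j \<in> S') \<noteq> 0 \<and> transfer loc b j False S' S \<noteq> 0)
     \<or> (loc (Suc j) c True (Suc j \<in> S) (Suc j \<in> S') \<noteq> 0 \<and> transfer loc b j True S' S \<noteq> 0)"
    by (auto simp del: of_bool_eq)
  then obtain d where
    d: "loc (Suc j) c d (Suc j \<in> S) (Suc j \<in> S') \<noteq> 0" "transfer loc b j d S' S \<noteq> 0"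
    by blast
  show ?case using Suc.IH[OF d(2)] conserve[OF d(1)] unfolding card_Suc[of S] card_Suc[of S']
    by (cases b; cases c; cases d; cases "Suc j \<in> S"; cases "Suc j \<in> S'") simp_all
qed

lemma Lloc'_conserves: "Lloc' \<beta> t x j a c s s' \<noteq> 0 \<Longrightarrow> (of_bool c + of_bool s :: nat) = of_bool a + of_bool s'"
  by (cases a; cases c; cases s; cases s') (auto simp: Lloc'_simps)

lemma Eop_nonzero_imp_card_eq:
  assumes "Eop \<beta> t q N y U S \<noteq> 0" "U \<subseteq> {1..N}" "S \<subseteq> {1..N}"
  shows "card U = card S"
proof -
  have conserve: "\<And>j a c s s'. Lloc' \<beta> t y j a c s s' \<noteq> 0 \<Longrightarrow> (of_bool c + of_bool s :: nat) = of_bool a + of_bool s'"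
    by (rule Lloc'_conserves)
  have "U \<inter> {1..N} = U" "S \<inter> {1..N} = S" using assms(2,3) by auto
  moreover from assms(1)
  have "transfer (Lloc' \<beta> t y) False N False U S \<noteq> 0 \<or> transfer (Lloc' \<beta> t y) True N True U S \<noteq> 0"
    unfolding Eop_def Mono_def by auto
  ultimately show ?thesis
    using transfer_nonzero_imp_card_eq[of "Lloc' \<beta> t y" False N False U S, OF conserve]
      transfer_nonzero_imp_card_eq[of "Lloc' \<beta> t y" True N True U S, OF conserve]
    by auto
qed

lemma sum_Pow_insert:
  assumes "finite A" "a \<notin> A"
  shows "(\<Sum>U\<in>Pow (insert a A). f U) = (\<Sum>U\<in>Pow A. f U) + (\<Sum>U\<in>Pow A. f (insert a U))"
proof -
  have "inj_on (insert a) (Pow A)"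
    using assms(2) by (intro inj_onI) (metis PowD insert_ident subsetD)
  moreover have "Pow A \<inter> insert a ` Pow A = {}" using assms(2) by auto
  ultimately show ?thesis
    using assms(1) by (simp add: Pow_insert sum.union_disjoint sum.reindex)
qed

section \<open>The product \<open>H(x|t) E(\<ominus>x|t)\<close>\<close>

text \<open>The product of two monodromy matrices, entries \<open>(c, b)\<close> and \<open>(c', b')\<close>, restricted to the
  first \<open>j\<close> sites of the quantum space.\<close>

definition transfer2 :: "(nat \<Rightarrow> bool \<Rightarrow> bool \<Rightarrow> bool \<Rightarrow> bool \<Rightarrow> 'a::field)
    \<Rightarrow> (nat \<Rightarrow> bool \<Rightarrow> bool \<Rightarrow> bool \<Rightarrow> bool \<Rightarrow> 'a) \<Rightarrow> bool \<Rightarrow> bool \<Rightarrow> nat \<Rightarrow> bool \<Rightarrow> bool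
    \<Rightarrow> nat set \<Rightarrow> nat set \<Rightarrow> 'a" where
  "transfer2 L L' b b' j c c' S' S = (\<Sum>U\<in>Pow {1..j}. transfer L b j c S' U * transfer L' b' j c' U S)"

lemma transfer2_0: "transfer2 L L' b b' 0 c c' S' S = (if c = b \<and> c' = b' then 1 else 0)"
  by (simp add: transfer2_def)

lemma transfer2_Suc:
  "transfer2 L L' b b' (Suc j) c c' S' S =
    (\<Sum>d\<in>UNIV. \<Sum>d'\<in>UNIV. \<Sum>u\<in>UNIV.
       L (Suc j) c d u (Suc j \<in> S') * L' (Suc j) c' d' (Suc j \<in> S) u * transfer2 L L' b b' j d d' S' S)"
proof -
  let ?w = "\<lambda>d d' u. L (Suc j) c d u (Suc j \<in> S') * L' (Suc j) c' d' (Suc j \<in> S) u"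
  let ?F = "\<lambda>U. transfer L b (Suc j) c S' U * transfer L' b' (Suc j) c' U S"
  have out: "transfer L b j d S' (insert (Suc j) U) = transfer L b j d S' U"
    "transfer L' b' j d (insert (Suc j) U) S = transfer L' b' j d U S" for d U
    by (rule transfer_cong, auto)+
  have site: "?F (if u then insert (Suc j) U else U)
      = (\<Sum>d\<in>UNIV. \<Sum>d'\<in>UNIV. ?w d d' u * (transfer L b j d S' U * transfer L' b' j d' U S))"
    if "U \<subseteq> {1..j}" for U u
  proof -
    have "Suc j \<notin> U" using that by auto
    then show ?thesis by (cases u) (simp_all add: out UNIV_bool algebra_simps)
  qed
  have "transfer2 L L' b b' (Suc j) c c' S' S = (\<Sum>U\<in>Pow (insert (Suc j) {1..j}). ?F U)"
    by (simp add: transfer2_def atLeastAtMostSuc_conv)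
  also have "\<dots> = (\<Sum>U\<in>Pow {1..j}. ?F U) + (\<Sum>U\<in>Pow {1..j}. ?F (insert (Suc j) U))"
    by (rule sum_Pow_insert) auto
  also have "\<dots> = (\<Sum>U\<in>Pow {1..j}. \<Sum>u\<in>UNIV. ?F (if u then insert (Suc j) U else U))"
    by (simp add: UNIV_bool sum.distrib)
  also have "\<dots> = (\<Sum>U\<in>Pow {1..j}. \<Sum>u\<in>UNIV. \<Sum>d\<in>UNIV. \<Sum>d'\<in>UNIV.
      ?w d d' u * (transfer L b j d S' U * transfer L' b' j d' U S))"
    by (intro sum.cong refl site) simp
  also have "\<dots> = (\<Sum>d\<in>UNIV. \<Sum>d'\<in>UNIV. \<Sum>u\<in>UNIV. ?w d d' u * transfer2 L L' b b' j d d' S' S)"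
    unfolding transfer2_def by (simp add: UNIV_bool sum.distrib sum_distrib_left)
  finally show ?thesis .
qed

text \<open>\<open>Lpieri\<close> is the leading coefficient in \<open>x\<close> of \<open>Lloc\<close> (up to the factor \<open>1/(1 + \<beta> t\<^sub>j)\<close> at
  empty sites), and the same weights govern the product \<open>H(x|t) E(\<ominus>x|t)\<close>; this coincidence is what
  links the two halves of the theorem. The site index is unused, as the weights are homogeneous.\<close>

definition Lpieri :: "'a::field \<Rightarrow> nat \<Rightarrow> bool \<Rightarrow> bool \<Rightarrow> bool \<Rightarrow> bool \<Rightarrow> 'a" where
  "Lpieri \<beta> j a c s s' = (if \<not> a \<and> \<not> c then (if s = s' then 1 else 0)
     else if \<not> a \<and> c then (if \<not> s \<and> s' then \<beta> else 0)
     else if a \<and> \<not> c then (if s \<and> \<not> s' then 1 else 0) else 0)"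

lemma Lpieri_simps:
  "Lpieri \<beta> j False False s s' = (if s = s' then 1 else 0)"
  "Lpieri \<beta> j False True s s' = (if \<not> s \<and> s' then \<beta> else 0)"
  "Lpieri \<beta> j True False s s' = (if s \<and> \<not> s' then 1 else 0)"
  "Lpieri \<beta> j True True s s' = 0"
  by (simp_all add: Lpieri_def)

definition eigen_weight :: "'a::field \<Rightarrow> (nat \<Rightarrow> 'a) \<Rightarrow> 'a \<Rightarrow> nat \<Rightarrow> nat set \<Rightarrow> 'a" where
  "eigen_weight \<beta> t x j S = (\<Prod>i\<in>{1..j}. if i \<in> S then ominusb \<beta> (t i) x else ominusb \<beta> x (t i))"

definition agree :: "nat \<Rightarrow> nat set \<Rightarrow> nat set \<Rightarrow> 'a::field" where
  "agree j S' S = (\<Prod>i\<in>{1..j}. if (i \<in> S) = (i \<in> S') then 1 else 0)"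

lemma eigen_weight_Suc:
  "eigen_weight \<beta> t x (Suc j) S =
    eigen_weight \<beta> t x j S * (if Suc j \<in> S then ominusb \<beta> (t (Suc j)) x else ominusb \<beta> x (t (Suc j)))"
  by (simp add: eigen_weight_def prod.cl_ivl_Suc)

lemma agree_Suc: "agree (Suc j) S' S = agree j S' S * (if (Suc j \<in> S) = (Suc j \<in> S') then 1 else 0)"
  by (simp add: agree_def prod.cl_ivl_Suc)

lemma agree_eq:
  assumes "S \<subseteq> {1..N}" "S' \<subseteq> {1..N}"
  shows "agree N S' S = (if S' = S then 1 else 0)"
proof (cases "S' = S")
  case False
  then obtain i where i: "(i \<in> S) \<noteq> (i \<in> S')" by (metis set_eqI)
  then have "i \<in> {1..N}" using assms by auto
  then show ?thesis using i False by (auto simp: agree_def prod_zero_iff)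
qed (simp add: agree_def)

text \<open>One step of \<open>transfer2_Suc\<close> mixes the auxiliary states, so these entries are computed by a
  simultaneous induction; the swap identities for \<open>\<ominus>\<close> make the weights telescope.\<close>

lemma transfer2_vacuum:
  fixes \<beta> x :: "'a::field"
  assumes "\<forall>i\<in>{1..j}. 1 + \<beta> * t i \<noteq> 0" "1 + \<beta> * x \<noteq> 0"
  defines "L \<equiv> Lloc \<beta> t x" and "L' \<equiv> Lloc' \<beta> t (onegb \<beta> x)"
  shows "transfer2 L L' False False j False False S' S = eigen_weight \<beta> t x j S * transfer (Lpieri \<beta>) False j False S' S
       \<and> transfer2 L L' False False j True False S' S = eigen_weight \<beta> t x j S * transfer (Lpieri \<beta>) False j True S' S
       \<and> transfer2 L L' False False j False True S' S = - eigen_weight \<beta> t x j S * transfer (Lpieri \<beta>) False j True S' S"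
  using assms(1)
proof (induction j)
  case 0
  then show ?case by (simp add: transfer2_0 eigen_weight_def)
next
  case (Suc j)
  have tj: "1 + \<beta> * t (Suc j) \<noteq> 0" using Suc.prems by auto
  from Suc have IH:
    "transfer2 L L' False False j False False S' S = eigen_weight \<beta> t x j S * transfer (Lpieri \<beta>) False j False S' S"
    "transfer2 L L' False False j True False S' S = eigen_weight \<beta> t x j S * transfer (Lpieri \<beta>) False j True S' S"
    "transfer2 L L' False False j False True S' S = - eigen_weight \<beta> t x j S * transfer (Lpieri \<beta>) False j True S' S"
    by auto
  show ?case
    unfolding transfer2_Suc L_def L'_def
    by (simp add: UNIV_bool IH[unfolded L_def L'_def] eigen_weight_Suc Lloc_simps Lloc'_simps Lpieri_simps
        oplusb_commute[of _ "onegb \<beta> x"] oplusb_onegb[OF assms(2)]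
        ominusb_mult_swap[OF assms(2) tj] one_plus_ominusb_mult_swap[OF assms(2) tj], (simp add: algebra_simps)?)
qed

lemma transfer2_occupied:
  "transfer2 (Lloc \<beta> t x) (Lloc' \<beta> t y) True True j c c' S' S = (if j = 0 \<and> c \<and> c' then 1 else 0)"
proof (induction j arbitrary: c c')
  case 0
  then show ?case by (simp add: transfer2_0)
next
  case (Suc j)
  then show ?case
    unfolding transfer2_Suc by (cases c; cases c') (simp_all add: UNIV_bool Lloc_simps Lloc'_simps)
qed

lemma transfer2_mixed:
  fixes \<beta> x :: "'a::field"
  assumes "\<forall>i\<in>{1..j}. 1 + \<beta> * t i \<noteq> 0" "1 + \<beta> * x \<noteq> 0"
  defines "L \<equiv> Lloc \<beta> t x" and "L' \<equiv> Lloc' \<beta> t (onegb \<beta> x)"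
  shows "transfer2 L L' False True j False True S' S = agree j S' S - transfer2 L L' False True j True False S' S
       \<and> transfer2 L L' True False j False True S' S = agree j S' S - transfer2 L L' True False j True False S' S
       \<and> transfer2 L L' True False j True False S' S
           = transfer2 L L' False True j True False S' S + eigen_weight \<beta> t x j S * transfer (Lpieri \<beta>) True j True S' S
       \<and> transfer2 L L' True False j False False S' S
           = transfer2 L L' False True j False False S' S + eigen_weight \<beta> t x j S * transfer (Lpieri \<beta>) True j False S' S"
  using assms(1)
proof (induction j)
  case 0
  then show ?case by (simp add: transfer2_0 eigen_weight_def agree_def)
next
  case (Suc j)
  have tj: "1 + \<beta> * t (Suc j) \<noteq> 0" using Suc.prems by auto
  from Suc have IH:
    "transfer2 L L' False True j False True S' S = agree j S' S - transfer2 L L' False True j True False S' S"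
    "transfer2 L L' True False j False True S' S = agree j S' S - transfer2 L L' True False j True False S' S"
    "transfer2 L L' True False j True False S' S
       = transfer2 L L' False True j True False S' S + eigen_weight \<beta> t x j S * transfer (Lpieri \<beta>) True j True S' S"
    "transfer2 L L' True False j False False S' S
       = transfer2 L L' False True j False False S' S + eigen_weight \<beta> t x j S * transfer (Lpieri \<beta>) True j False S' S"
    by auto
  show ?case
    unfolding transfer2_Suc L_def L'_def
    by (simp add: UNIV_bool IH[unfolded L_def L'_def] eigen_weight_Suc agree_Suc Lloc_simps Lloc'_simps Lpieri_simps
        oplusb_commute[of _ "onegb \<beta> x"] oplusb_onegb[OF assms(2)]
        ominusb_mult_swap[OF assms(2) tj] one_plus_ominusb_mult_swap[OF assms(2) tj], (simp add: algebra_simps)?)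
qed

lemma Hop_Eop_product:
  fixes \<beta> x q :: "'a::field"
  assumes S: "S \<in> nsub n N" and S': "S' \<in> nsub n N" and N: "N \<ge> 1"
    and tne: "\<forall>i\<in>{1..N}. 1 + \<beta> * t i \<noteq> 0" and xne: "1 + \<beta> * x \<noteq> 0"
  shows "(\<Sum>U\<in>nsub n N. Hop \<beta> t q N x S' U * Eop \<beta> t q N (onegb \<beta> x) U S)
    = eigen_weight \<beta> t x N S * (transfer (Lpieri \<beta>) False N False S' S + q * transfer (Lpieri \<beta>) True N True S' S)
      + (if S' = S then q else 0)"
proof -
  let ?L = "Lloc \<beta> t x" and ?L' = "Lloc' \<beta> t (onegb \<beta> x)"
  have SS: "S \<subseteq> {1..N}" "S' \<subseteq> {1..N}" "card S = n" using S S' by (auto simp: nsub_def)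
  have "(\<Sum>U\<in>nsub n N. Hop \<beta> t q N x S' U * Eop \<beta> t q N (onegb \<beta> x) U S)
      = (\<Sum>U\<in>Pow {1..N}. Hop \<beta> t q N x S' U * Eop \<beta> t q N (onegb \<beta> x) U S)"
    using Eop_nonzero_imp_card_eq SS
    by (intro sum.mono_neutral_left) (fastforce simp: nsub_def)+
  also have "\<dots> = transfer2 ?L ?L' False False N False False S' S + q * transfer2 ?L ?L' False True N False True S' S
       + q * transfer2 ?L ?L' True False N True False S' S + q * q * transfer2 ?L ?L' True True N True True S' S"
    unfolding Hop_def Eop_def Mono_def transfer2_def
    by (simp add: algebra_simps sum.distrib sum_distrib_left)
  also have "\<dots> = eigen_weight \<beta> t x N S * (transfer (Lpieri \<beta>) False N False S' S + q * transfer (Lpieri \<beta>) True N True S' S)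
      + q * agree N S' S"
  proof -
    note vacuum = transfer2_vacuum[OF tne xne, of S' S] and mixed = transfer2_mixed[OF tne xne, of S' S]
    have "transfer2 ?L ?L' True True N True True S' S = 0"
      using transfer2_occupied[of \<beta> t x "onegb \<beta> x" N True True S' S] N by simp
    then show ?thesis
      by (simp only: conjunct1[OF vacuum] conjunct1[OF mixed] conjunct1[OF conjunct2[OF conjunct2[OF mixed]]])
        (simp add: algebra_simps)
  qed
  finally show ?thesis
    using agree_eq[OF SS(1,2), where 'a='a] by simp
qed

lemma ominusb_swap:
  fixes \<beta> :: "'a::field"
  assumes "1 + \<beta> * x \<noteq> 0" "1 + \<beta> * y \<noteq> 0"
  shows "ominusb \<beta> y x = - 1 / (1 + \<beta> * x) * (1 + \<beta> * y) * ominusb \<beta> x y"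
  using assms unfolding ominusb_def by (simp add: divide_simps)

lemma eigen_weight_eq_PiT:
  fixes \<beta> x :: "'a::field" and n k :: nat
  assumes tne: "\<forall>j\<in>{1..n + k}. 1 + \<beta> * t j \<noteq> 0" and xne: "1 + \<beta> * x \<noteq> 0"
    and S: "S \<in> nsub n (n + k)"
  shows "eigen_weight \<beta> t x (n + k) S
    = (\<Prod>j\<in>{1..n}. ominusb \<beta> (t j) x) * (\<Prod>j\<in>{n + 1..n + k}. ominusb \<beta> x (t j))
      * (PiT \<beta> t S / PiT \<beta> t {1..n})"
proof -
  define a where "a i = ominusb \<beta> x (t i)" for i
  define \<rho> where "\<rho> = - 1 / (1 + \<beta> * x)"
  have swap: "ominusb \<beta> (t i) x = \<rho> * (1 + \<beta> * t i) * a i" if "i \<in> {1..n + k}" for i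
    unfolding \<rho>_def a_def using ominusb_swap[OF xne] tne that by blast
  have S_sub: "S \<subseteq> {1..n + k}" and "card S = n" using S by (auto simp: nsub_def)
  have "eigen_weight \<beta> t x (n + k) S = (\<Prod>i\<in>{1..n + k}. a i * (if i \<in> S then \<rho> * (1 + \<beta> * t i) else 1))"
    unfolding eigen_weight_def by (intro prod.cong) (auto simp: swap a_def)
  also have "\<dots> = prod a {1..n + k} * (\<Prod>i\<in>S. \<rho> * (1 + \<beta> * t i))"
    using S_sub by (simp add: prod.distrib prod.If_cases Int_absorb1)
  also have "\<dots> = prod a {1..n} * prod a {n + 1..n + k} * (\<rho> ^ n * PiT \<beta> t S)"
  proof -
    have "{1..n + k} = {1..n} \<union> {n + 1..n + k}" by auto
    then have "prod a {1..n + k} = prod a {1..n} * prod a {n + 1..n + k}" by (simp add: prod.union_disjoint)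
    then show ?thesis using \<open>card S = n\<close> by (simp add: PiT_def prod.distrib)
  qed
  moreover have "(\<Prod>j\<in>{1..n}. ominusb \<beta> (t j) x) = \<rho> ^ n * PiT \<beta> t {1..n} * prod a {1..n}"
    using swap by (simp add: PiT_def prod.distrib)
  moreover have "(\<Prod>j\<in>{n + 1..n + k}. ominusb \<beta> x (t j)) = prod a {n + 1..n + k}" unfolding a_def ..
  moreover have "PiT \<beta> t {1..n} \<noteq> 0" using tne unfolding PiT_def by (auto simp: prod_zero_iff)
  ultimately show ?thesis by (simp add: field_simps)
qed


section \<open>\<open>H(x|t)\<close> as a polynomial in \<open>x\<close>, and the operator \<open>H\<^sub>1\<close>\<close>

text \<open>\<open>transfer\<close> requires a field; this copy over commutative rings lets us run the monodromy
  recursion on polynomials in \<open>x\<close>.\<close>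

fun transfer_ring :: "(nat \<Rightarrow> bool \<Rightarrow> bool \<Rightarrow> bool \<Rightarrow> bool \<Rightarrow> 'a::comm_ring_1) \<Rightarrow> bool \<Rightarrow> nat \<Rightarrow> bool
                  \<Rightarrow> nat set \<Rightarrow> nat set \<Rightarrow> 'a" where
  "transfer_ring loc b 0 c S' S = (if c = b then 1 else 0)"
| "transfer_ring loc b (Suc j) c S' S =
     loc (Suc j) c False (Suc j \<in> S) (Suc j \<in> S') * transfer_ring loc b j False S' S
   + loc (Suc j) c True (Suc j \<in> S) (Suc j \<in> S') * transfer_ring loc b j True S' S"

lemma transfer_eq_transfer_ring: "transfer loc b j c S' S = transfer_ring loc b j c S' S"
  by (induction j arbitrary: c) auto

lemma poly_transfer_ring:
  "poly (transfer_ring L b j c S' S) x = transfer_ring (\<lambda>j a c s s'. poly (L j a c s s') x) b j c S' S"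
  by (induction j arbitrary: c) auto

lemma transfer_ring_mult_site:
  "transfer_ring (\<lambda>j a c s s'. g j s * w j a c s s') b j c S' S
     = (\<Prod>i\<in>{1..j}. g i (i \<in> S)) * transfer_ring w b j c S' S"
  by (induction j arbitrary: c) (simp_all add: prod.cl_ivl_Suc algebra_simps)

lemma coeff_mult_degree_le:
  fixes p q :: "'a::idom poly"
  assumes "degree p \<le> m" "degree q \<le> n"
  shows "coeff (p * q) (m + n) = coeff p m * coeff q n"
proof (cases "degree p = m \<and> degree q = n")
  case True
  then show ?thesis using coeff_mult_degree_sum[of p q] by simp
next
  case False
  then have "degree (p * q) < m + n" using degree_mult_le[of p q] assms by linarith
  moreover have "coeff p m = 0 \<or> coeff q n = 0" using False assms
    by (metis coeff_eq_0 le_neq_implies_less)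
  ultimately show ?thesis by (auto simp: coeff_eq_0)
qed

lemma transfer_ring_degree_coeff:
  fixes L :: "nat \<Rightarrow> bool \<Rightarrow> bool \<Rightarrow> bool \<Rightarrow> bool \<Rightarrow> 'a::idom poly"
  assumes deg: "\<And>j a c s s'. degree (L j a c s s') \<le> dd j s"
  shows "degree (transfer_ring L b j c S' S) \<le> (\<Sum>i\<in>{1..j}. dd i (i \<in> S))
     \<and> coeff (transfer_ring L b j c S' S) (\<Sum>i\<in>{1..j}. dd i (i \<in> S))
        = transfer_ring (\<lambda>j a c s s'. coeff (L j a c s s') (dd j s)) b j c S' S"
proof (induction j arbitrary: c)
  case 0
  then show ?case by simp
next
  case (Suc j)
  let ?m = "\<Sum>i\<in>{1..j}. dd i (i \<in> S)"
  have sum_Suc: "(\<Sum>i\<in>{1..Suc j}. dd i (i \<in> S)) = dd (Suc j) (Suc j \<in> S) + ?m"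
    by (simp add: sum.cl_ivl_Suc)
  have "degree (L (Suc j) c d (Suc j \<in> S) (Suc j \<in> S') * transfer_ring L b j d S' S)
      \<le> dd (Suc j) (Suc j \<in> S) + ?m" for d
    using degree_mult_le[of "L (Suc j) c d (Suc j \<in> S) (Suc j \<in> S')" "transfer_ring L b j d S' S"]
      deg[of "Suc j" c d "Suc j \<in> S" "Suc j \<in> S'"] Suc.IH[of d] by linarith
  then show ?case
    unfolding sum_Suc using Suc.IH[of False] Suc.IH[of True]
    by (auto simp: degree_add_le coeff_mult_degree_le[OF deg])
qed

definition ominus_poly :: "'a::field \<Rightarrow> (nat \<Rightarrow> 'a) \<Rightarrow> nat \<Rightarrow> 'a poly" where
  "ominus_poly \<beta> t j = [: - t j / (1 + \<beta> * t j), 1 / (1 + \<beta> * t j) :]"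

lemma poly_ominus_poly: "poly (ominus_poly \<beta> t j) x = ominusb \<beta> x (t j)"
  by (simp add: ominus_poly_def ominusb_def add_divide_distrib diff_divide_distrib algebra_simps)

lemma ominus_poly_degree_coeff:
  "1 + \<beta> * t j \<noteq> 0 \<Longrightarrow>
    ominus_poly \<beta> t j \<noteq> 0 \<and> degree (ominus_poly \<beta> t j) = 1 \<and> coeff (ominus_poly \<beta> t j) 1 = 1 / (1 + \<beta> * t j)"
  by (simp add: ominus_poly_def)

definition Lloc_poly :: "'a::field \<Rightarrow> (nat \<Rightarrow> 'a) \<Rightarrow> nat \<Rightarrow> bool \<Rightarrow> bool \<Rightarrow> bool \<Rightarrow> bool \<Rightarrow> 'a poly" where
  "Lloc_poly \<beta> t j a c s s' =
    (if \<not> a \<and> \<not> c then (if s = s' then (if s then 1 else ominus_poly \<beta> t j) else 0)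
     else if \<not> a \<and> c then (if \<not> s \<and> s' then 1 + smult \<beta> (ominus_poly \<beta> t j) else 0)
     else if a \<and> \<not> c then (if s \<and> \<not> s' then 1 else 0)
     else (if \<not> s \<and> \<not> s' then 1 else 0))"

lemma poly_Lloc_poly: "(\<lambda>j a c s s'. poly (Lloc_poly \<beta> t j a c s s') x) = Lloc \<beta> t x"
  by (intro ext) (simp add: Lloc_poly_def Lloc_def poly_ominus_poly)

lemma degree_Lloc_poly: "degree (Lloc_poly \<beta> t j a c s s') \<le> of_bool (\<not> s)"
  by (auto simp: Lloc_poly_def ominus_poly_def degree_add_le)

lemma coeff_Lloc_poly:
  "coeff (Lloc_poly \<beta> t j a c s s') (of_bool (\<not> s))
     = (if s then 1 else 1 / (1 + \<beta> * t j)) * Lpieri \<beta> j a c s s'"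
  by (auto simp: Lloc_poly_def ominus_poly_def Lpieri_def)

definition Hop_poly :: "'a::field \<Rightarrow> (nat \<Rightarrow> 'a) \<Rightarrow> 'a \<Rightarrow> nat \<Rightarrow> nat set \<Rightarrow> nat set \<Rightarrow> 'a poly" where
  "Hop_poly \<beta> t q N S' S =
     transfer_ring (Lloc_poly \<beta> t) False N False S' S + smult q (transfer_ring (Lloc_poly \<beta> t) True N True S' S)"

lemma poly_Hop_poly: "poly (Hop_poly \<beta> t q N S' S) x = Hop \<beta> t q N x S' S"
  by (simp add: Hop_poly_def Hop_def Mono_def transfer_eq_transfer_ring poly_transfer_ring poly_Lloc_poly)

lemma nsub_props:
  assumes "S \<in> nsub n (n + k)"
  shows "S \<subseteq> {1..n + k}" "card S = n" "card ({1..n + k} - S) = k" "finite S"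
proof -
  show S: "S \<subseteq> {1..n + k}" "card S = n" using assms by (auto simp: nsub_def)
  then show "card ({1..n + k} - S) = k" by (simp add: card_Diff_subset finite_subset)
  show "finite S" using S(1) finite_subset by blast
qed

lemma Hop_poly_degree_coeff:
  assumes "S \<in> nsub n (n + k)"
  shows "degree (Hop_poly \<beta> t q (n + k) S' S) \<le> k
   \<and> coeff (Hop_poly \<beta> t q (n + k) S' S) k
       = (\<Prod>i\<in>{1..n + k}. if i \<in> S then 1 else 1 / (1 + \<beta> * t i))
         * (transfer (Lpieri \<beta>) False (n + k) False S' S + q * transfer (Lpieri \<beta>) True (n + k) True S' S)"
proof -
  have "(\<Sum>i\<in>{1..n + k}. of_bool (i \<notin> S)) = card ({1..n + k} - S)"
    by (simp add: sum.If_cases Diff_eq Collect_neg_eq)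
  then have empty_sites: "(\<Sum>i\<in>{1..n + k}. of_bool (i \<notin> S)) = k"
    using nsub_props(3)[OF assms] by simp
  note lead = transfer_ring_degree_coeff[where L = "Lloc_poly \<beta> t" and dd = "\<lambda>j s. of_bool (\<not> s)"
      and j = "n + k" and S = S, OF degree_Lloc_poly, unfolded empty_sites]
  have top: "(\<lambda>j a c s s'. coeff (Lloc_poly \<beta> t j a c s s') (of_bool (\<not> s))) =
        (\<lambda>j a c s s'. (\<lambda>j s. if s then 1 else 1 / (1 + \<beta> * t j)) j s * Lpieri \<beta> j a c s s')"
    by (intro ext) (simp add: coeff_Lloc_poly)
  show ?thesis
    using lead[of False False S'] lead[of True True S']
    unfolding Hop_poly_def top transfer_ring_mult_site transfer_eq_transfer_ring
    by (auto simp: degree_add_le algebra_simps intro: order.trans[OF degree_add_le])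
qed

text \<open>At the pole \<open>x = -1/\<beta>\<close> the factor \<open>1 + \<beta> (x \<ominus> t\<^sub>j)\<close> vanishes, so no particle can enter from
  the auxiliary space and \<open>H(x|t)\<close> becomes diagonal.\<close>

lemma ominusb_pole:
  fixes \<beta> :: "'a::field"
  shows "\<beta> \<noteq> 0 \<Longrightarrow> 1 + \<beta> * y \<noteq> 0 \<Longrightarrow> ominusb \<beta> (- (1 / \<beta>)) y = - (1 / \<beta>)"
  unfolding ominusb_def by (simp add: divide_simps)

lemma transfer_Lloc_pole_occupied:
  fixes \<beta> :: "'a::field"
  assumes "\<beta> \<noteq> 0" "\<forall>i\<in>{1..j}. 1 + \<beta> * t i \<noteq> 0"
  shows "transfer (Lloc \<beta> t (- (1 / \<beta>))) True j c S' S = (if c \<and> (\<forall>i\<in>{1..j}. i \<notin> S \<and> i \<notin> S') then 1 else 0)"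
  using assms(2)
proof (induction j arbitrary: c)
  case 0
  then show ?case by simp
next
  case (Suc j)
  have "1 + \<beta> * t (Suc j) \<noteq> 0" using Suc.prems by auto
  then have "1 + \<beta> * ominusb \<beta> (- (1 / \<beta>)) (t (Suc j)) = 0" using ominusb_pole[OF assms(1)] assms(1) by simp
  with Suc show ?case by (cases c) (auto simp: Lloc_simps atLeastAtMostSuc_conv)
qed

lemma transfer_Lloc_pole_vacuum:
  fixes \<beta> :: "'a::field"
  assumes "\<beta> \<noteq> 0" "\<forall>i\<in>{1..j}. 1 + \<beta> * t i \<noteq> 0"
  shows "transfer (Lloc \<beta> t (- (1 / \<beta>))) False j False S' S =
     (if \<forall>i\<in>{1..j}. (i \<in> S) = (i \<in> S') then (\<Prod>i\<in>{1..j}. if i \<in> S then 1 else - (1 / \<beta>)) else 0)"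
  using assms(2)
proof (induction j)
  case 0
  then show ?case by simp
next
  case (Suc j)
  have tj: "1 + \<beta> * t (Suc j) \<noteq> 0" using Suc.prems by auto
  then have "1 + \<beta> * ominusb \<beta> (- (1 / \<beta>)) (t (Suc j)) = 0" using ominusb_pole[OF assms(1)] assms(1) by simp
  with Suc show ?case
    using assms(1) by (auto simp: Lloc_simps ominusb_pole[OF assms(1) tj] atLeastAtMostSuc_conv prod.cl_ivl_Suc)
qed

lemma Hop_pole:
  fixes \<beta> :: "'a::field"
  assumes "\<beta> \<noteq> 0" and tne: "\<forall>i\<in>{1..n + k}. 1 + \<beta> * t i \<noteq> 0" and "n \<ge> 1"
    and S: "S \<in> nsub n (n + k)" and S': "S' \<in> nsub n (n + k)"
  shows "Hop \<beta> t q (n + k) (- (1 / \<beta>)) S' S = (if S' = S then (- (1 / \<beta>)) ^ k else 0)"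
proof -
  note P = nsub_props[OF S] and P' = nsub_props[OF S']
  have "S \<noteq> {}" using P(2) \<open>n \<ge> 1\<close> by auto
  then have occupied: "\<exists>i\<in>{1..n + k}. i \<in> S" using P(1) by auto
  have agree: "(\<forall>i\<in>{1..n + k}. (i \<in> S) = (i \<in> S')) = (S' = S)" using P(1) P'(1) by auto
  have "(\<Prod>i\<in>{1..n + k}. if i \<in> S then 1 else y) = y ^ card ({1..n + k} - S)" for y :: 'a
    by (simp add: prod.If_cases Diff_eq Collect_neg_eq)
  then show ?thesis
    unfolding Hop_def Mono_def transfer_Lloc_pole_vacuum[OF assms(1) tne] transfer_Lloc_pole_occupied[OF assms(1) tne]
      agree P(3)
    using occupied by auto
qed

lemma transfer_Lpieri_zero:
  "transfer (Lpieri 0) False j False S' S = agree j S' S"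
  "j \<ge> 1 \<Longrightarrow> transfer (Lpieri (0::'a::field)) True j True S' S = 0"
proof -
  show "transfer (Lpieri 0) False j False S' S = agree j S' S"
    by (induction j) (auto simp: Lpieri_simps agree_Suc agree_def)
  have "transfer (Lpieri (0::'a)) True j False S' S = 0 \<and> (j \<ge> 1 \<longrightarrow> transfer (Lpieri (0::'a)) True j True S' S = 0)"
    by (induction j) (auto simp: Lpieri_simps)
  then show "j \<ge> 1 \<Longrightarrow> transfer (Lpieri (0::'a::field)) True j True S' S = 0" by blast
qed

definition tpoch_poly :: "'a::field \<Rightarrow> (nat \<Rightarrow> 'a) \<Rightarrow> nat \<Rightarrow> nat \<Rightarrow> 'a poly" where
  "tpoch_poly \<beta> t N m = (\<Prod>i\<in>{1..m}. ominus_poly \<beta> t (N + 1 - i))"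

lemma poly_tpoch_poly:
  assumes "\<forall>i\<in>{1..m}. 1 + \<beta> * t (N + 1 - i) \<noteq> 0"
  shows "poly (tpoch_poly \<beta> t N m) x = tpoch \<beta> t N m x"
  unfolding tpoch_poly_def tpoch_def poly_prod poly_ominus_poly
  using assms by (intro prod.cong) (auto simp: oplusb_onegb)

lemma tpoch_poly_degree_coeff:
  assumes "\<forall>i\<in>{1..m}. 1 + \<beta> * t (N + 1 - i) \<noteq> 0"
  shows "degree (tpoch_poly \<beta> t N m) = m
    \<and> coeff (tpoch_poly \<beta> t N m) m = (\<Prod>i\<in>{1..m}. 1 / (1 + \<beta> * t (N + 1 - i)))"
proof -
  have nz: "\<forall>i\<in>{1..m}. ominus_poly \<beta> t (N + 1 - i) \<noteq> 0" using assms ominus_poly_degree_coeff by blast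
  have "degree (tpoch_poly \<beta> t N m) = (\<Sum>i\<in>{1..m}. 1)"
    unfolding tpoch_poly_def degree_prod_eq_sum_degree[OF nz]
  proof (intro sum.cong refl)
    fix i assume "i \<in> {1..m}"
    then show "degree (ominus_poly \<beta> t (N + 1 - i)) = 1" using assms ominus_poly_degree_coeff by blast
  qed
  moreover have "lead_coeff (tpoch_poly \<beta> t N m) = (\<Prod>i\<in>{1..m}. 1 / (1 + \<beta> * t (N + 1 - i)))"
    unfolding tpoch_poly_def lead_coeff_prod
  proof (intro prod.cong refl)
    fix i assume "i \<in> {1..m}"
    then have "1 + \<beta> * t (N + 1 - i) \<noteq> 0" using assms by blast
    then show "lead_coeff (ominus_poly \<beta> t (N + 1 - i)) = 1 / (1 + \<beta> * t (N + 1 - i))"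
      using ominus_poly_degree_coeff by metis
  qed
  ultimately show ?thesis by simp
qed

lemma coeff_tpoch_poly_Suc:
  assumes "\<forall>i\<in>{1..Suc m}. 1 + \<beta> * t (N + 1 - i) \<noteq> 0"
  shows "coeff (tpoch_poly \<beta> t N (Suc m)) (Suc m) = coeff (tpoch_poly \<beta> t N m) m / (1 + \<beta> * t (N - m))"
proof -
  have ne: "\<forall>i\<in>{1..m}. 1 + \<beta> * t (N + 1 - i) \<noteq> 0" using assms by auto
  have deg: "degree (tpoch_poly \<beta> t N m) \<le> m" using tpoch_poly_degree_coeff[OF ne] by simp
  have ne_top: "1 + \<beta> * t (N - m) \<noteq> 0" using bspec[OF assms, of "Suc m"] by simp
  have factor: "degree (ominus_poly \<beta> t (N - m)) \<le> 1"
    "coeff (ominus_poly \<beta> t (N - m)) 1 = 1 / (1 + \<beta> * t (N - m))"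
    using ominus_poly_degree_coeff[of \<beta> t "N - m"] ne_top by simp_all
  have "tpoch_poly \<beta> t N (Suc m) = tpoch_poly \<beta> t N m * ominus_poly \<beta> t (N - m)"
    by (simp add: tpoch_poly_def prod.cl_ivl_Suc)
  then show ?thesis using coeff_mult_degree_le[OF deg factor(1)] factor(2) by simp
qed

lemma tpoch_index_ne:
  fixes n k m :: nat
  assumes "\<forall>j\<in>{1..n + k}. 1 + \<beta> * t j \<noteq> 0" "m \<le> k"
  shows "\<forall>i\<in>{1..m}. 1 + \<beta> * t (n + k + 1 - i) \<noteq> 0"
proof
  fix i assume "i \<in> {1..m}"
  then have "n + k + 1 - i \<in> {1..n + k}" using assms(2) by auto
  then show "1 + \<beta> * t (n + k + 1 - i) \<noteq> 0" using assms(1) by blast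
qed

lemma tpoch_poly_degree_basis:
  fixes n k m :: nat
  assumes "\<forall>j\<in>{1..n + k}. 1 + \<beta> * t j \<noteq> 0" and "m \<le> k"
  shows "\<forall>i\<le>m. degree (tpoch_poly \<beta> t (n + k) i) = i \<and> coeff (tpoch_poly \<beta> t (n + k) i) i \<noteq> 0"
proof (intro allI impI)
  fix i assume "i \<le> m"
  then have ne: "\<forall>j\<in>{1..i}. 1 + \<beta> * t (n + k + 1 - j) \<noteq> 0"
    using tpoch_index_ne[OF assms(1)] assms(2) by auto
  then show "degree (tpoch_poly \<beta> t (n + k) i) = i \<and> coeff (tpoch_poly \<beta> t (n + k) i) i \<noteq> 0"
    using tpoch_poly_degree_coeff[OF ne] by (simp add: prod_zero_iff)
qed

lemma degree_basis_span:
  fixes p :: "nat \<Rightarrow> 'a::field poly"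
  assumes "\<forall>i\<le>m. degree (p i) = i \<and> coeff (p i) i \<noteq> 0" "degree g \<le> m"
  shows "\<exists>c. g = (\<Sum>i\<le>m. smult (c i) (p i))"
  using assms
proof (induction m arbitrary: g)
  case 0
  then have g: "g = [:coeff g 0:]" and p0: "p 0 = [:coeff (p 0) 0:]" "coeff (p 0) 0 \<noteq> 0"
    by (auto simp: degree_0_id)
  have "smult (coeff g 0 / coeff (p 0) 0) (p 0) = g"
    by (subst p0(1), subst g) (use p0(2) in simp)
  then show ?case by (intro exI[of _ "\<lambda>i. coeff g 0 / coeff (p 0) 0"]) simp
next
  case (Suc m g)
  define a where "a = coeff g (Suc m) / coeff (p (Suc m)) (Suc m)"
  have top: "degree (p (Suc m)) = Suc m" "coeff (p (Suc m)) (Suc m) \<noteq> 0" using Suc.prems by auto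
  have "degree (g - smult a (p (Suc m))) \<le> m"
  proof (rule degree_le, intro allI impI)
    fix i assume "m < i"
    then consider "i = Suc m" | "i > Suc m" by linarith
    then show "coeff (g - smult a (p (Suc m))) i = 0"
      by cases (use top Suc.prems(2) in \<open>simp_all add: a_def coeff_eq_0\<close>)
  qed
  then obtain c where c: "g - smult a (p (Suc m)) = (\<Sum>i\<le>m. smult (c i) (p i))"
    using Suc.IH Suc.prems(1) by auto
  then have "g = (\<Sum>i\<le>Suc m. smult ((c(Suc m := a)) i) (p i))"
    by (simp add: algebra_simps)
  then show ?case by blast
qed

lemma degree_basis_independent:
  fixes p :: "nat \<Rightarrow> 'a::field poly"
  assumes "\<forall>i\<le>m. degree (p i) = i \<and> coeff (p i) i \<noteq> 0" "(\<Sum>i\<le>m. smult (c i) (p i)) = 0"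
  shows "\<forall>i\<le>m. c i = 0"
  using assms
proof (induction m)
  case 0
  then show ?case by (auto simp: poly_eq_iff)
next
  case (Suc m)
  have "degree (\<Sum>i\<le>m. smult (c i) (p i)) \<le> m"
    by (rule degree_sum_le) (use Suc.prems(1) in \<open>auto intro: order.trans[OF degree_smult_le]\<close>)
  then have "coeff (\<Sum>i\<le>m. smult (c i) (p i)) (Suc m) = 0"
    by (intro coeff_eq_0) simp
  then have "c (Suc m) * coeff (p (Suc m)) (Suc m) = 0"
    using arg_cong[OF Suc.prems(2), of "\<lambda>f. coeff f (Suc m)"] by simp
  then have top: "c (Suc m) = 0" using Suc.prems(1) by simp
  then have "\<forall>i\<le>m. c i = 0" using Suc.IH Suc.prems by simp
  then show ?case using top le_Suc_eq by auto
qed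

lemma sum_reverse_atLeast1:
  "(k::nat) \<ge> 1 \<Longrightarrow> (\<Sum>r\<in>{1..k}. f (k - r)) = (\<Sum>i\<le>k - 1. f i)"
  by (rule sum.reindex_bij_witness[of _ "\<lambda>i. k - i" "\<lambda>r. k - r"]) auto

text \<open>The right-hand side of the expansion defining \<open>H\<^sub>1, \<dots>, H\<^sub>k\<close>, for one matrix entry:
  \<open>\<delta>\<close> is the identity entry and \<open>h r\<close> the entry of \<open>H\<^sub>r\<close>.\<close>

definition Hexp_poly :: "'a::field \<Rightarrow> (nat \<Rightarrow> 'a) \<Rightarrow> nat \<Rightarrow> nat \<Rightarrow> 'a \<Rightarrow> (nat \<Rightarrow> 'a) \<Rightarrow> 'a poly" where
  "Hexp_poly \<beta> t n k \<delta> h = smult \<delta> (tpoch_poly \<beta> t (n + k) k)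
     + [:1, \<beta>:] * (\<Sum>r\<in>{1..k}. smult (h r / (1 + \<beta> * t (n + r))) (tpoch_poly \<beta> t (n + k) (k - r)))"

lemma poly_Hexp_poly:
  fixes n k :: nat
  assumes tne: "\<forall>j\<in>{1..n + k}. 1 + \<beta> * t j \<noteq> 0"
  shows "poly (Hexp_poly \<beta> t n k \<delta> h) x = \<delta> * tpoch \<beta> t (n + k) k x
     + (1 + \<beta> * x) * (\<Sum>r\<in>{1..k}. h r * tpoch \<beta> t (n + k) (k - r) x / (1 + \<beta> * t (n + r)))"
proof -
  have p: "poly (tpoch_poly \<beta> t (n + k) m) x = tpoch \<beta> t (n + k) m x" if "m \<le> k" for m
    by (rule poly_tpoch_poly) (use tpoch_index_ne[OF tne that] in simp)
  have "(\<Sum>r\<in>{1..k}. poly (smult (h r / (1 + \<beta> * t (n + r))) (tpoch_poly \<beta> t (n + k) (k - r))) x)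
     = (\<Sum>r\<in>{1..k}. h r * tpoch \<beta> t (n + k) (k - r) x / (1 + \<beta> * t (n + r)))"
    by (rule sum.cong) (auto simp: p)
  then show ?thesis
    unfolding Hexp_poly_def by (simp add: poly_sum p mult.commute) (simp add: algebra_simps)
qed

lemma coeff_Hexp_poly_top:
  fixes n k :: nat
  assumes tne: "\<forall>j\<in>{1..n + k}. 1 + \<beta> * t j \<noteq> 0" and k: "k \<ge> 1"
  shows "coeff (Hexp_poly \<beta> t n k \<delta> h) k = coeff (tpoch_poly \<beta> t (n + k) k) k * (\<delta> + \<beta> * h 1)"
proof -
  let ?P = "\<lambda>r. smult (h r / (1 + \<beta> * t (n + r))) (tpoch_poly \<beta> t (n + k) (k - r))"
  note basis = tpoch_poly_degree_basis[OF tne order.refl]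
  obtain m where m: "k = Suc m" using k by (cases k) auto
  have low: "coeff (?P r) i = 0" if "r \<in> {1..k}" "k - r < i" for r i
    using basis that by (auto intro!: coeff_eq_0)
  have Q_top: "coeff (sum ?P {1..k}) k = 0"
    unfolding coeff_sum using low by (intro sum.neutral) auto
  have Q_below: "coeff (sum ?P {1..k}) m = coeff (?P 1) m"
  proof -
    have "coeff (sum ?P {1..k}) m = (\<Sum>r\<in>{1}. coeff (?P r) m)"
      unfolding coeff_sum
    proof (intro sum.mono_neutral_right ballI)
      fix r assume "r \<in> {1..k} - {1}"
      then show "coeff (?P r) m = 0" using m by (intro low) auto
    qed (use m in auto)
    then show ?thesis by simp
  qed
  have top: "coeff (tpoch_poly \<beta> t (n + k) k) k = coeff (tpoch_poly \<beta> t (n + k) m) m / (1 + \<beta> * t (n + 1))"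
    using coeff_tpoch_poly_Suc[of m \<beta> t "n + k"] tpoch_index_ne[OF tne order.refl] m by simp
  have shift: "coeff ([:1, \<beta>:] * p) k = coeff p k + \<beta> * coeff p m" for p :: "'a poly"
    by (simp add: m)
  have "k - 1 = m" using m by simp
  then show ?thesis
    unfolding Hexp_poly_def coeff_add coeff_smult shift Q_top Q_below top
    by (simp add: algebra_simps add_divide_distrib)
qed

lemma factor_one_plus_beta_x:
  fixes P :: "'a::field poly"
  assumes deg: "degree P \<le> k" and top: "\<beta> = 0 \<Longrightarrow> coeff P k = 0"
    and pole: "\<beta> \<noteq> 0 \<Longrightarrow> poly P (- (1 / \<beta>)) = 0"
  shows "\<exists>g. P = [:1, \<beta>:] * g \<and> degree g \<le> k - 1"
proof (cases "\<beta> = 0")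
  case True
  then have "degree P \<le> k - 1" using deg top by (intro degree_le) (auto simp: coeff_eq_0 le_less Suc_le_eq)
  then show ?thesis using True by (intro exI[of _ P]) simp
next
  case False
  then obtain g where g: "P = [:1 / \<beta>, 1:] * g"
    using pole by (auto simp: poly_eq_0_iff_dvd elim: dvdE)
  have "[:1 / \<beta>, 1:] * g = [:1, \<beta>:] * smult (1 / \<beta>) g"
    using False by (simp add: mult_smult_right[symmetric] del: mult_smult_right)
  moreover have "degree g \<le> k - 1"
  proof (cases "g = 0")
    case False
    then have "degree P = 1 + degree g" unfolding g by (subst degree_mult_eq) auto
    then show ?thesis using deg by simp
  qed simp
  ultimately show ?thesis using g by (intro exI[of _ "smult (1 / \<beta>) g"]) simp
qed

text \<open>Apart from its diagonal part \<open>\<delta> (x|t\<^sup>*)\<^sup>k\<close>, an entry of \<open>H(x|t)\<close> is divisible by \<open>1 + \<beta> x\<close>: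
  for \<open>\<beta> \<noteq> 0\<close> it vanishes at the pole \<open>-1/\<beta>\<close>, and for \<open>\<beta> = 0\<close> its top coefficient vanishes.\<close>

lemma Hop_poly_minus_diagonal_factor:
  fixes n k :: nat and \<beta> q :: "'a::field"
  assumes n: "n \<ge> 1" and k: "k \<ge> 1" and tne: "\<forall>j\<in>{1..n + k}. 1 + \<beta> * t j \<noteq> 0"
    and S: "S \<in> nsub n (n + k)" and S': "S' \<in> nsub n (n + k)"
  defines "\<delta> \<equiv> if S' = S then 1 else 0"
  shows "\<exists>g. Hop_poly \<beta> t q (n + k) S' S - smult \<delta> (tpoch_poly \<beta> t (n + k) k) = [:1, \<beta>:] * g
    \<and> degree g \<le> k - 1"
proof (rule factor_one_plus_beta_x)
  note H = Hop_poly_degree_coeff[OF S, of \<beta> t q S']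
  have ne: "\<forall>i\<in>{1..k}. 1 + \<beta> * t (n + k + 1 - i) \<noteq> 0" using tpoch_index_ne[OF tne order.refl] .
  show "degree (Hop_poly \<beta> t q (n + k) S' S - smult \<delta> (tpoch_poly \<beta> t (n + k) k)) \<le> k"
    using H tpoch_poly_degree_basis[OF tne order.refl]
    by (intro degree_diff_le) (auto intro: order.trans[OF degree_smult_le])
  assume "\<beta> = 0"
  then have "coeff (tpoch_poly \<beta> t (n + k) k) k = 1" using tpoch_poly_degree_coeff[OF ne] by simp
  moreover have "transfer (Lpieri \<beta>) False (n + k) False S' S = \<delta>"
  proof -
    have "transfer (Lpieri \<beta>) False (n + k) False S' S = agree (n + k) S' S"
      using \<open>\<beta> = 0\<close> transfer_Lpieri_zero(1) by simp
    also have "\<dots> = \<delta>"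
      unfolding \<delta>_def by (rule agree_eq[OF nsub_props(1)[OF S] nsub_props(1)[OF S']])
    finally show ?thesis .
  qed
  moreover have "transfer (Lpieri \<beta>) True (n + k) True S' S = 0"
    using \<open>\<beta> = 0\<close> transfer_Lpieri_zero(2)[of "n + k" S' S] k by simp
  ultimately show "coeff (Hop_poly \<beta> t q (n + k) S' S - smult \<delta> (tpoch_poly \<beta> t (n + k) k)) k = 0"
    using conjunct2[OF H] \<open>\<beta> = 0\<close> by (simp cong: if_cong)
next
  assume "\<beta> \<noteq> 0"
  have "\<forall>i\<in>{1..k}. 1 + \<beta> * t (n + k + 1 - i) \<noteq> 0" using tpoch_index_ne[OF tne order.refl] .
  then have "poly (tpoch_poly \<beta> t (n + k) k) (- (1 / \<beta>)) = (- (1 / \<beta>)) ^ k"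
    unfolding tpoch_poly_def poly_prod poly_ominus_poly by (simp add: ominusb_pole[OF \<open>\<beta> \<noteq> 0\<close>])
  then show "poly (Hop_poly \<beta> t q (n + k) S' S - smult \<delta> (tpoch_poly \<beta> t (n + k) k)) (- (1 / \<beta>)) = 0"
    using Hop_pole[OF \<open>\<beta> \<noteq> 0\<close> tne n S S', of q] by (simp add: poly_Hop_poly \<delta>_def)
qed

lemma Hop_poly_expansion_exists:
  fixes n k :: nat and \<beta> q :: "'a::field"
  assumes n: "n \<ge> 1" and k: "k \<ge> 1" and tne: "\<forall>j\<in>{1..n + k}. 1 + \<beta> * t j \<noteq> 0"
    and S: "S \<in> nsub n (n + k)" and S': "S' \<in> nsub n (n + k)"
  shows "\<exists>h. Hop_poly \<beta> t q (n + k) S' S = Hexp_poly \<beta> t n k (if S' = S then 1 else 0) h"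
proof -
  obtain g where g: "Hop_poly \<beta> t q (n + k) S' S - smult (if S' = S then 1 else 0) (tpoch_poly \<beta> t (n + k) k)
      = [:1, \<beta>:] * g" "degree g \<le> k - 1"
    using Hop_poly_minus_diagonal_factor[OF n k tne S S'] by blast
  obtain c where c: "g = (\<Sum>i\<le>k - 1. smult (c i) (tpoch_poly \<beta> t (n + k) i))"
    using degree_basis_span[OF tpoch_poly_degree_basis[OF tne, of "k - 1"] g(2)] by auto
  define h where "h r = c (k - r) * (1 + \<beta> * t (n + r))" for r
  have "(\<Sum>r\<in>{1..k}. smult (h r / (1 + \<beta> * t (n + r))) (tpoch_poly \<beta> t (n + k) (k - r)))
      = (\<Sum>r\<in>{1..k}. (\<lambda>i. smult (c i) (tpoch_poly \<beta> t (n + k) i)) (k - r))"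
    using tne by (intro sum.cong) (auto simp: h_def)
  also have "\<dots> = g" unfolding c by (rule sum_reverse_atLeast1[OF k])
  finally show ?thesis
    using g(1) unfolding Hexp_poly_def by (intro exI[of _ h]) (simp add: algebra_simps)
qed

lemma Hexp_poly_inj:
  fixes n k :: nat and \<beta> :: "'a::field"
  assumes k: "k \<ge> 1" and tne: "\<forall>j\<in>{1..n + k}. 1 + \<beta> * t j \<noteq> 0"
    and eq: "Hexp_poly \<beta> t n k \<delta> h = Hexp_poly \<beta> t n k \<delta> h'" and r: "r \<in> {1..k}"
  shows "h r = h' r"
proof -
  define e where "e i = (h (k - i) - h' (k - i)) / (1 + \<beta> * t (n + (k - i)))" for i
  let ?Q = "\<lambda>h. \<Sum>r\<in>{1..k}. smult (h r / (1 + \<beta> * t (n + r))) (tpoch_poly \<beta> t (n + k) (k - r))"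
  have "[:1, \<beta>:] * ?Q h = [:1, \<beta>:] * ?Q h'" using eq unfolding Hexp_poly_def by simp
  then have "?Q h - ?Q h' = 0" by (subst (asm) mult_cancel_left) simp
  moreover have "?Q h - ?Q h' = (\<Sum>r\<in>{1..k}. (\<lambda>i. smult (e i) (tpoch_poly \<beta> t (n + k) i)) (k - r))"
    unfolding sum_subtractf[symmetric]
    by (intro sum.cong) (auto simp: e_def diff_divide_distrib smult_diff_left)
  ultimately have "(\<Sum>i\<le>k - 1. smult (e i) (tpoch_poly \<beta> t (n + k) i)) = 0"
    using sum_reverse_atLeast1[OF k, of "\<lambda>i. smult (e i) (tpoch_poly \<beta> t (n + k) i)"] by simp
  then have "e (k - r) = 0"
    using degree_basis_independent[OF tpoch_poly_degree_basis[OF tne, of "k - 1"]] r by auto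
  moreover have "k - (k - r) = r" "1 + \<beta> * t (n + r) \<noteq> 0" using tne r by auto
  ultimately show ?thesis by (simp add: e_def)
qed

definition Hcoef_spec :: "'a::field \<Rightarrow> (nat \<Rightarrow> 'a) \<Rightarrow> 'a \<Rightarrow> nat \<Rightarrow> nat \<Rightarrow> (nat \<Rightarrow> nat set \<Rightarrow> nat set \<Rightarrow> 'a) \<Rightarrow> bool" where
  "Hcoef_spec \<beta> t q n k Hs =
      ((\<forall>r S' S. (r \<notin> {1..k} \<or> S \<notin> nsub n (n + k) \<or> S' \<notin> nsub n (n + k)) \<longrightarrow> Hs r S' S = 0)
    \<and> (\<forall>x. \<forall>S\<in>nsub n (n + k). \<forall>S'\<in>nsub n (n + k).
         Hop \<beta> t q (n + k) x S' S =
           (if S' = S then tpoch \<beta> t (n + k) k x else 0)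
           + (1 + \<beta> * x) * (\<Sum>r\<in>{1..k}. Hs r S' S * tpoch \<beta> t (n + k) (k - r) x
                                          / (1 + \<beta> * t (n + r)))))"

lemma Hcoef_spec_imp_Hop_poly:
  fixes \<beta> q :: "'a::field_char_0" and n k :: nat
  assumes H: "Hcoef_spec \<beta> t q n k Hs" and tne: "\<forall>j\<in>{1..n + k}. 1 + \<beta> * t j \<noteq> 0"
    and S: "S \<in> nsub n (n + k)" and S': "S' \<in> nsub n (n + k)"
  shows "Hop_poly \<beta> t q (n + k) S' S = Hexp_poly \<beta> t n k (if S' = S then 1 else 0) (\<lambda>r. Hs r S' S)"
proof -
  have "poly (Hop_poly \<beta> t q (n + k) S' S) = poly (Hexp_poly \<beta> t n k (if S' = S then 1 else 0) (\<lambda>r. Hs r S' S))"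
    using H S S' unfolding poly_Hop_poly poly_Hexp_poly[OF tne] Hcoef_spec_def by (intro ext) auto
  then show ?thesis by (simp add: poly_eq_poly_eq_iff)
qed

lemma Hcoef_spec_ex1:
  fixes \<beta> q :: "'a::field_char_0" and n k :: nat
  assumes n: "n \<ge> 1" and k: "k \<ge> 1" and tne: "\<forall>j\<in>{1..n + k}. 1 + \<beta> * t j \<noteq> 0"
  shows "\<exists>!Hs. Hcoef_spec \<beta> t q n k Hs"
proof (rule ex_ex1I)
  define h where "h S' S = (SOME h. Hop_poly \<beta> t q (n + k) S' S = Hexp_poly \<beta> t n k (if S' = S then 1 else 0) h)"
    for S' S
  have h: "Hop_poly \<beta> t q (n + k) S' S = Hexp_poly \<beta> t n k (if S' = S then 1 else 0) (h S' S)"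
    if "S \<in> nsub n (n + k)" "S' \<in> nsub n (n + k)" for S S'
    unfolding h_def by (rule someI_ex[OF Hop_poly_expansion_exists[OF n k tne that]])
  define Hs where "Hs r S' S = (if r \<in> {1..k} \<and> S \<in> nsub n (n + k) \<and> S' \<in> nsub n (n + k) then h S' S r else 0)"
    for r S' S
  have "Hop \<beta> t q (n + k) x S' S = (if S' = S then tpoch \<beta> t (n + k) k x else 0)
      + (1 + \<beta> * x) * (\<Sum>r\<in>{1..k}. Hs r S' S * tpoch \<beta> t (n + k) (k - r) x / (1 + \<beta> * t (n + r)))"
    if S: "S \<in> nsub n (n + k)" and S': "S' \<in> nsub n (n + k)" for x S S'
    unfolding poly_Hop_poly[symmetric] h[OF S S'] poly_Hexp_poly[OF tne]
    using S S' by (auto simp: Hs_def intro!: sum.cong)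
  then show "\<exists>Hs. Hcoef_spec \<beta> t q n k Hs"
    unfolding Hcoef_spec_def by (intro exI[of _ Hs]) (auto simp: Hs_def)
next
  fix A B assume A: "Hcoef_spec \<beta> t q n k A" and B: "Hcoef_spec \<beta> t q n k B"
  show "A = B"
  proof (intro ext)
    fix r S' S
    show "A r S' S = B r S' S"
    proof (cases "r \<in> {1..k} \<and> S \<in> nsub n (n + k) \<and> S' \<in> nsub n (n + k)")
      case True
      then have eq: "Hexp_poly \<beta> t n k (if S' = S then 1 else 0) (\<lambda>r. A r S' S)
          = Hexp_poly \<beta> t n k (if S' = S then 1 else 0) (\<lambda>r. B r S' S)"
        using Hcoef_spec_imp_Hop_poly[OF A tne] Hcoef_spec_imp_Hop_poly[OF B tne] by auto
      show ?thesis using Hexp_poly_inj[OF k tne eq, of r] True by simp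
    qed (use A B in \<open>auto simp: Hcoef_spec_def\<close>)
  qed
qed

lemma leading_factor_ratio:
  fixes \<beta> :: "'a::field" and n k :: nat
  assumes tne: "\<forall>j\<in>{1..n + k}. 1 + \<beta> * t j \<noteq> 0" and S: "S \<subseteq> {1..n + k}"
  shows "(\<Prod>i\<in>{1..n + k}. if i \<in> S then 1 else 1 / (1 + \<beta> * t i))
      / (\<Prod>i\<in>{1..k}. 1 / (1 + \<beta> * t (n + k + 1 - i))) = PiT \<beta> t S / PiT \<beta> t {1..n}"
proof -
  let ?f = "\<lambda>i. 1 + \<beta> * t i"
  let ?A = "{1..n + k}"
  have G: "(\<Prod>i\<in>?A. if i \<in> S then 1 else 1 / ?f i) = 1 / prod ?f (?A - S)"
    by (simp add: prod.If_cases Diff_eq Collect_neg_eq prod_dividef)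
  have "(\<Prod>i\<in>{1..k}. ?f (n + k + 1 - i)) = prod ?f {n + 1..n + k}"
    by (rule prod.reindex_bij_witness[of _ "\<lambda>j. n + k + 1 - j" "\<lambda>i. n + k + 1 - i"]) auto
  then have C: "(\<Prod>i\<in>{1..k}. 1 / ?f (n + k + 1 - i)) = 1 / prod ?f {n + 1..n + k}"
    by (simp add: prod_dividef)
  have "?A = {1..n} \<union> {n + 1..n + k}" by auto
  then have split: "prod ?f ?A = prod ?f {1..n} * prod ?f {n + 1..n + k}"
    by (simp add: prod.union_disjoint)
  have "prod ?f ?A = prod ?f (?A - S) * prod ?f S"
    using prod.subset_diff[OF S] by simp
  moreover have "prod ?f (?A - S) \<noteq> 0" "prod ?f {n + 1..n + k} \<noteq> 0" "prod ?f {1..n} \<noteq> 0"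
    using tne by (auto simp: prod_zero_iff)
  ultimately show ?thesis
    unfolding G C PiT_def using split by (simp add: field_simps)
qed

lemma one_plus_beta_H1:
  fixes \<beta> q :: "'a::field_char_0" and n k :: nat
  assumes n: "n \<ge> 1" and k: "k \<ge> 1" and tne: "\<forall>j\<in>{1..n + k}. 1 + \<beta> * t j \<noteq> 0"
    and S: "S \<in> nsub n (n + k)" and S': "S' \<in> nsub n (n + k)"
  shows "(if S' = S then 1 else 0) + \<beta> * Hcoef \<beta> t q n k 1 S' S
     = PiT \<beta> t S / PiT \<beta> t {1..n}
       * (transfer (Lpieri \<beta>) False (n + k) False S' S + q * transfer (Lpieri \<beta>) True (n + k) True S' S)"
proof -
  let ?R = "transfer (Lpieri \<beta>) False (n + k) False S' S + q * transfer (Lpieri \<beta>) True (n + k) True S' S"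
  let ?G = "\<Prod>i\<in>{1..n + k}. if i \<in> S then 1 else 1 / (1 + \<beta> * t i)"
  let ?c = "\<Prod>i\<in>{1..k}. 1 / (1 + \<beta> * t (n + k + 1 - i))"
  have "Hcoef_spec \<beta> t q n k (Hcoef \<beta> t q n k)"
    unfolding Hcoef_def Hcoef_spec_def[symmetric] by (rule theI'[OF Hcoef_spec_ex1[OF n k tne]])
  then have P: "Hop_poly \<beta> t q (n + k) S' S = Hexp_poly \<beta> t n k (if S' = S then 1 else 0) (\<lambda>r. Hcoef \<beta> t q n k r S' S)"
    by (rule Hcoef_spec_imp_Hop_poly[OF _ tne S S'])
  have ne: "\<forall>i\<in>{1..k}. 1 + \<beta> * t (n + k + 1 - i) \<noteq> 0" using tpoch_index_ne[OF tne order.refl] .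
  then have top: "coeff (tpoch_poly \<beta> t (n + k) k) k = ?c" using tpoch_poly_degree_coeff by blast
  have "?c \<noteq> 0" using ne by (auto simp: prod_zero_iff)
  moreover have "?G * ?R = ?c * ((if S' = S then 1 else 0) + \<beta> * Hcoef \<beta> t q n k 1 S' S)"
    using conjunct2[OF Hop_poly_degree_coeff[OF S, of \<beta> t q S']] coeff_Hexp_poly_top[OF tne k]
    unfolding P top by simp
  ultimately have "(if S' = S then 1 else 0) + \<beta> * Hcoef \<beta> t q n k 1 S' S = ?G / ?c * ?R"
    by (simp add: field_simps)
  also have "?G / ?c = PiT \<beta> t S / PiT \<beta> t {1..n}"
    by (rule leading_factor_ratio[OF tne nsub_props(1)[OF S]])
  finally show ?thesis .
qed

lemma Hop_mult_Eop_onegb: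
  fixes \<beta> q :: "'a::field_char_0" and t :: "nat \<Rightarrow> 'a" and n k :: nat
  assumes n: "n \<ge> 1" and k: "k \<ge> 1" and tne: "\<forall>j\<in>{1..n + k}. 1 + \<beta> * t j \<noteq> 0"
    and xne: "1 + \<beta> * x \<noteq> 0" and S: "S \<in> nsub n (n + k)" and S': "S' \<in> nsub n (n + k)"
  shows "(\<Sum>U\<in>nsub n (n + k). Hop \<beta> t q (n + k) x S' U * Eop \<beta> t q (n + k) (onegb \<beta> x) U S)
      = (\<Prod>j\<in>{1..n}. ominusb \<beta> (t j) x) * (\<Prod>j\<in>{n + 1..n + k}. ominusb \<beta> x (t j))
          * ((if S' = S then 1 else 0) + \<beta> * Hcoef \<beta> t q n k 1 S' S)
        + (if S' = S then q else 0)"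
proof -
  have N: "n + k \<ge> 1" using n by simp
  show ?thesis
    unfolding Hop_Eop_product[OF S S' N tne xne] eigen_weight_eq_PiT[OF tne xne S] one_plus_beta_H1[OF n k tne S S']
    by (simp add: algebra_simps add_divide_distrib)
qed


section \<open>Particles, cylindric loops and Pieri pairs\<close>

lemma card_Int_atLeastAtMost_Suc:
  "finite A \<Longrightarrow> card (A \<inter> {1..Suc j}) = card (A \<inter> {1..j}) + (if Suc j \<in> A then 1 else 0)"
proof -
  have "A \<inter> {1..Suc j} = (if Suc j \<in> A then insert (Suc j) (A \<inter> {1..j}) else A \<inter> {1..j})"
    by (auto simp: atLeastAtMostSuc_conv)
  then show "finite A \<Longrightarrow> ?thesis" by auto
qed

text \<open>A nonzero entry of the Pieri transfer matrix moves every particle of \<open>S - S'\<close> one site to the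
  right; the particle leaving site \<open>j\<close> ends in the auxiliary space.\<close>

lemma transfer_Lpieri:
  assumes "finite S'"
  shows "transfer (Lpieri \<beta>) b j c S' S =
    (if c = (if j = 0 then b else (j \<in> S \<and> j \<notin> S'))
        \<and> (\<forall>i\<in>{1..j}. (i \<in> S' \<and> i \<notin> S) = (if i = 1 then b else (i - 1 \<in> S \<and> i - 1 \<notin> S')))
     then \<beta> ^ card ((S' - S) \<inter> {1..j}) else 0)"
proof (induction j arbitrary: c)
  case 0
  then show ?case by simp
next
  case (Suc j)
  have card: "card ((S' - S) \<inter> {1..Suc j}) = card ((S' - S) \<inter> {1..j}) + (if Suc j \<in> S' - S then 1 else 0)"
    using card_Int_atLeastAtMost_Suc[of "S' - S" j] assms by simp
  have all: "(\<forall>i\<in>{1..Suc j}. P i) = ((\<forall>i\<in>{1..j}. P i) \<and> P (Suc j))" for P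
    by (auto simp: atLeastAtMostSuc_conv)
  show ?case
    unfolding transfer.simps Suc.IH all card
    by (cases c; cases "j = 0"; cases "Suc j \<in> S"; cases "Suc j \<in> S'"; cases "j \<in> S"; cases "j \<in> S'"; cases b)
       (simp_all add: Lpieri_simps)
qed

text \<open>\<open>S'\<close> arises from \<open>S\<close> by moving each particle of \<open>S - S'\<close> one site to the right, cyclically
  on \<open>{1..N}\<close>; \<open>d\<close> records whether a particle winds from site \<open>N\<close> to site \<open>1\<close>.\<close>

definition shift_move :: "nat \<Rightarrow> bool \<Rightarrow> nat set \<Rightarrow> nat set \<Rightarrow> bool" where
  "shift_move N d S' S \<longleftrightarrow> (d \<longleftrightarrow> N \<in> S \<and> N \<notin> S')
     \<and> (\<forall>i\<in>{1..N}. (i \<in> S' \<and> i \<notin> S) = (if i = 1 then d else (i - 1 \<in> S \<and> i - 1 \<notin> S')))"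

lemma transfer_Lpieri_diagonal:
  assumes "S' \<subseteq> {1..N}" "N \<ge> 1"
  shows "transfer (Lpieri \<beta>) d N d S' S = (if shift_move N d S' S then \<beta> ^ card (S' - S) else 0)"
proof -
  have "(S' - S) \<inter> {1..N} = S' - S" using assms(1) by auto
  moreover have "finite S'" using assms(1) finite_subset by blast
  ultimately show ?thesis
    unfolding transfer_Lpieri[OF \<open>finite S'\<close>] shift_move_def using assms(2) by (intro if_cong) auto
qed

lemma strict_dec_gap:
  fixes f :: "int \<Rightarrow> int"
  assumes "\<forall>i. f (i + 1) < f i" "i \<le> j"
  shows "f j + (j - i) \<le> f i"
proof -
  obtain m :: nat where m: "j = i + int m" using assms(2) by (metis le_add_diff_inverse zle_iff_zadd)
  have "f (i + int m) + int m \<le> f i" for m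
  proof (induction m)
    case (Suc m)
    have "f (i + int (Suc m)) < f (i + int m)" using spec[OF assms(1), of "i + int m"] by (simp add: algebra_simps)
    then show ?case using Suc.IH by linarith
  qed simp
  then show ?thesis using m by simp
qed

lemma range_shift: "range (\<lambda>i. h (i - c)) = range (h :: int \<Rightarrow> 'b)"
proof (intro equalityI subsetI)
  fix x assume "x \<in> range h"
  then obtain i where "x = h i" by auto
  then have "x = h ((i + c) - c)" by simp
  then show "x \<in> range (\<lambda>i. h (i - c))" by blast
qed auto

lemma range_move_removed:
  fixes f e :: "int \<Rightarrow> int"
  assumes dec: "\<And>i j. i < j \<Longrightarrow> f j < f i"
    and e01: "\<And>i. e i = 0 \<or> e i = 1"
    and free: "\<And>i. e i = 1 \<Longrightarrow> f i + 1 \<notin> range f"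
  shows "range f - range (\<lambda>i. f i + e i) = f ` {i. e i = 1}"
proof (intro equalityI subsetI)
  fix x assume "x \<in> range f - range (\<lambda>i. f i + e i)"
  then obtain i where i: "x = f i" "\<forall>j. x \<noteq> f j + e j" by auto
  then have "e i \<noteq> 0" by (metis add.right_neutral)
  then show "x \<in> f ` {i. e i = 1}" using i e01 by auto
next
  fix x assume "x \<in> f ` {i. e i = 1}"
  then obtain i where i: "x = f i" "e i = 1" by auto
  have ne: "f j + e j \<noteq> f i" for j
  proof (cases j i rule: linorder_cases)
    case less
    then show ?thesis using dec[OF less] e01[of j] by auto
  next
    case greater
    then have "f j < f i" by (rule dec)
    show ?thesis
    proof
      assume "f j + e j = f i"
      then have "e j = 1" "f j + 1 = f i" using \<open>f j < f i\<close> e01[of j] by auto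
      then show False using free[of j] by auto
    qed
  qed (use i in simp)
  have "f i \<notin> range (\<lambda>i. f i + e i)"
  proof
    assume "f i \<in> range (\<lambda>i. f i + e i)"
    then obtain j where "f i = f j + e j" by blast
    then show False using ne[of j] by simp
  qed
  then show "x \<in> range f - range (\<lambda>i. f i + e i)" using i by auto
qed

lemma range_move_added:
  fixes f e :: "int \<Rightarrow> int"
  assumes e01: "\<And>i. e i = 0 \<or> e i = 1"
    and free: "\<And>i. e i = 1 \<Longrightarrow> f i + 1 \<notin> range f"
  shows "range (\<lambda>i. f i + e i) - range f = (\<lambda>i. f i + 1) ` {i. e i = 1}"
proof (intro equalityI subsetI)
  fix x assume "x \<in> range (\<lambda>i. f i + e i) - range f"
  then obtain i where i: "x = f i + e i" "x \<notin> range f" by auto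
  then have "e i = 1" using e01[of i] by auto
  then show "x \<in> (\<lambda>i. f i + 1) ` {i. e i = 1}" using i by auto
next
  fix x assume "x \<in> (\<lambda>i. f i + 1) ` {i. e i = 1}"
  then obtain i where i: "x = f i + 1" "e i = 1" by auto
  have "f i + e i \<in> range (\<lambda>i. f i + e i)" by (rule rangeI)
  then show "x \<in> range (\<lambda>i. f i + e i) - range f" using i free[of i] by auto
qed

text \<open>In the particle picture \<open>F i + c - i\<close> of a loop \<open>F\<close>, two boxes added to \<open>F\<close> lie in the same
  column exactly when a moved particle would land on an occupied place.\<close>

lemma free_target_if_distinct_columns:
  fixes F G :: "int \<Rightarrow> int" and c :: int
  assumes decF: "\<And>i. F (i + 1) + c - (i + 1) < F i + c - i"
    and decG: "\<And>i. G (i + 1) + c - (i + 1) < G i + c - i"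
    and e01: "\<And>i. G i - F i = 0 \<or> G i - F i = 1"
    and distinct: "\<And>i i'. G i - F i = 1 \<Longrightarrow> G i' - F i' = 1 \<Longrightarrow> F i = F i' \<Longrightarrow> i = i'"
    and moved: "G i - F i = 1"
  shows "F i + c - i + 1 \<notin> range (\<lambda>i. F i + c - i)"
proof
  define f where "f = (\<lambda>i. F i + c - i)"
  assume "F i + c - i + 1 \<in> range (\<lambda>i. F i + c - i)"
  then obtain j where j: "f j = f i + 1" unfolding f_def by auto
  have dec1: "\<forall>i. f (i + 1) < f i" using decF by (simp add: f_def)
  have "j < i"
  proof (rule ccontr)
    assume "\<not> j < i"
    then have "i \<le> j" by simp
    then show False using strict_dec_gap[of f, OF dec1, of i j] j by simp
  qed
  have "j = i - 1"
  proof (rule ccontr)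
    assume "j \<noteq> i - 1"
    then have "j + 1 \<le> i - 1" using \<open>j < i\<close> by simp
    have "f (i - 1) + ((i - 1) - (j + 1)) \<le> f (j + 1)"
      by (rule strict_dec_gap[of f, OF dec1]) (use \<open>j + 1 \<le> i - 1\<close> in simp)
    moreover have "f (j + 1) < f j" using dec1 by blast
    moreover have "f i + 1 \<le> f (i - 1)" using spec[OF dec1, of "i - 1"] by simp
    ultimately show False using j \<open>j + 1 \<le> i - 1\<close> by simp
  qed
  then have step_back: "F (i - 1) + c - (i - 1) = F i + c - i + 1" using j by (simp add: f_def)
  have "G i + c - i < G (i - 1) + c - (i - 1)" using decG[of "i - 1"] by simp
  then have "G (i - 1) - F (i - 1) = 1" using step_back moved e01[of "i - 1"] by auto
  moreover have "F (i - 1) = F i" using step_back by simp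
  ultimately have "i - 1 = i" using distinct[OF _ moved] by blast
  then show False by simp
qed

lemma distinct_columns_if_free_target:
  fixes F :: "int \<Rightarrow> int" and c :: int
  assumes decF: "\<And>i. F (i + 1) + c - (i + 1) < F i + c - i"
    and free: "\<And>i. G i - F i = 1 \<Longrightarrow> F i + c - i + 1 \<notin> range (\<lambda>i. F i + c - i)"
    and moved: "G i - F i = 1" and moved': "G i' - F i' = 1" and same_col: "F i = F i'"
  shows "i = i'"
proof (rule ccontr)
  define f where "f = (\<lambda>i. F i + c - i)"
  have dec1: "\<forall>i. f (i + 1) < f i" using decF by (simp add: f_def)
  have free': "G i - F i = 1 \<Longrightarrow> f i + 1 \<notin> range f" for i using free[of i] by (simp add: f_def)
  assume "i \<noteq> i'"
  then consider "i < i'" | "i' < i" by linarith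
  then show False
  proof cases
    case 1
    have a: "f i' + 1 \<le> f (i' - 1)" using spec[OF dec1, of "i' - 1"] by simp
    have b: "f (i' - 1) + ((i' - 1) - i) \<le> f i" by (rule strict_dec_gap[of f, OF dec1]) (use 1 in simp)
    have "f (i' - 1) = f i' + 1" using a b same_col by (simp add: f_def)
    then show False using free'[OF moved'] by (metis rangeI)
  next
    case 2
    have a: "f i + 1 \<le> f (i - 1)" using spec[OF dec1, of "i - 1"] by simp
    have b: "f (i - 1) + ((i - 1) - i') \<le> f i'" by (rule strict_dec_gap[of f, OF dec1]) (use 2 in simp)
    have "f (i - 1) = f i + 1" using a b same_col by (simp add: f_def)
    then show False using free'[OF moved] by (metis rangeI)
  qed
qed

definition Lift :: "nat \<Rightarrow> nat set \<Rightarrow> int set" where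
  "Lift N A = {x. \<exists>a\<in>A. \<exists>m::int. x = int a + m * int N}"

lemma eq_add_mult_bounded:
  assumes "a \<in> {1..N}" "b \<in> {1..N}" "int a = int b + m * int N"
  shows "m = 0"
proof (rule ccontr)
  have "m * int N = int a - int b" using assms(3) by simp
  then have bounds: "- int N < m * int N" "m * int N < int N" using assms(1,2) by auto
  assume "m \<noteq> 0"
  then consider "m \<ge> 1" | "m \<le> - 1" by linarith
  then show False
  proof cases
    case 1
    then have "1 * int N \<le> m * int N" by (intro mult_right_mono) auto
    then show False using bounds by linarith
  next
    case 2
    then have "m * int N \<le> (- 1) * int N" by (intro mult_right_mono) auto
    then show False using bounds by linarith
  qed
qed

lemma Lift_mem:
  assumes "A \<subseteq> {1..N}" "x \<in> {1..N}"
  shows "int x \<in> Lift N A \<longleftrightarrow> x \<in> A"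
proof
  assume "int x \<in> Lift N A"
  then obtain a m where a: "a \<in> A" "int x = int a + m * int N" unfolding Lift_def by auto
  moreover have "a \<in> {1..N}" using a assms(1) by auto
  ultimately have "m = 0" using eq_add_mult_bounded[OF assms(2)] by blast
  then show "x \<in> A" using a by simp
next
  assume "x \<in> A"
  then show "int x \<in> Lift N A" unfolding Lift_def by (intro CollectI bexI[of _ x] exI[of _ 0]) simp_all
qed

lemma Lift_shift: "x + m * int N \<in> Lift N A \<longleftrightarrow> x \<in> Lift N A"
proof
  assume "x + m * int N \<in> Lift N A"
  then obtain a m' where "a \<in> A" "x + m * int N = int a + m' * int N" unfolding Lift_def by auto
  then have "x = int a + (m' - m) * int N" by (simp add: algebra_simps)
  then show "x \<in> Lift N A" using \<open>a \<in> A\<close> unfolding Lift_def by auto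
next
  assume "x \<in> Lift N A"
  then obtain a m' where "a \<in> A" "x = int a + m' * int N" unfolding Lift_def by auto
  then have "x + m * int N = int a + (m' + m) * int N" by (simp add: algebra_simps)
  then show "x + m * int N \<in> Lift N A" using \<open>a \<in> A\<close> unfolding Lift_def by auto
qed

lemma int_decomp:
  assumes "N \<ge> (1::nat)"
  obtains r a where "r \<in> {1..N}" "i = int r + a * int N"
proof -
  have "0 \<le> (i - 1) mod int N" "(i - 1) mod int N < int N" using assms by auto
  then have "nat ((i - 1) mod int N) + 1 \<in> {1..N}" "i = int (nat ((i - 1) mod int N) + 1) + ((i - 1) div int N) * int N"
    by (auto simp: algebra_simps)
  then show ?thesis using that by blast
qed

lemma all_int_iff_all_period:
  fixes P :: "int \<Rightarrow> bool"
  assumes N: "N \<ge> 1" and period: "\<And>x m. P (x + m * int N) \<longleftrightarrow> P x"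
  shows "(\<forall>x. P x) \<longleftrightarrow> (\<forall>r\<in>{1..N}. P (int r))"
proof (intro iffI allI)
  fix x assume "\<forall>r\<in>{1..N}. P (int r)"
  moreover obtain r m where "r \<in> {1..N}" "x = int r + m * int N" using int_decomp[OF N] by blast
  ultimately show "P x" using period by blast
qed simp

lemma shift_move_iff_Lift:
  assumes S: "S \<subseteq> {1..N}" and S': "S' \<subseteq> {1..N}" and N: "N \<ge> 1"
  shows "shift_move N d S' S \<longleftrightarrow> (d \<longleftrightarrow> N \<in> S \<and> N \<notin> S')
    \<and> (\<forall>x. x \<in> Lift N S' - Lift N S \<longleftrightarrow> x - 1 \<in> Lift N S - Lift N S')"
proof -
  let ?D = "Lift N S - Lift N S'" and ?D' = "Lift N S' - Lift N S"
  have mem: "(y \<in> S \<and> y \<notin> S') \<longleftrightarrow> int y \<in> ?D" "(y \<in> S' \<and> y \<notin> S) \<longleftrightarrow> int y \<in> ?D'"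
    if "y \<in> {1..N}" for y
    using Lift_mem[OF S that] Lift_mem[OF S' that] by auto
  have shift: "x + m * int N \<in> ?D \<longleftrightarrow> x \<in> ?D" "x + m * int N \<in> ?D' \<longleftrightarrow> x \<in> ?D'" for x m
    using Lift_shift[of x m N S] Lift_shift[of x m N S'] by auto
  have pred: "int r - 1 \<in> ?D \<longleftrightarrow> (if r = 1 then N \<in> S \<and> N \<notin> S' else r - 1 \<in> S \<and> r - 1 \<notin> S')"
    if "r \<in> {1..N}" for r
  proof (cases "r = 1")
    case True
    then have "int r - 1 = int N + (- 1) * int N" by simp
    then have "int r - 1 \<in> ?D \<longleftrightarrow> int N \<in> ?D" using shift(1)[of "int N" "- 1"] by presburger
    also have "\<dots> \<longleftrightarrow> N \<in> S \<and> N \<notin> S'" using mem(1)[of N] N by simp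
    finally show ?thesis using True by simp
  next
    case False
    then have r1: "r - 1 \<in> {1..N}" and eq: "int r - 1 = int (r - 1)" using that by auto
    have "int r - 1 \<in> ?D \<longleftrightarrow> r - 1 \<in> S \<and> r - 1 \<notin> S'" unfolding eq using mem(1)[OF r1] by blast
    then show ?thesis using False by simp
  qed
  have "(x + m * int N \<in> ?D' \<longleftrightarrow> x + m * int N - 1 \<in> ?D) \<longleftrightarrow> (x \<in> ?D' \<longleftrightarrow> x - 1 \<in> ?D)" for x m
    using shift(1)[of "x - 1" m] shift(2)[of x m] by (simp add: algebra_simps)
  then have lifted: "(\<forall>x. x \<in> ?D' \<longleftrightarrow> x - 1 \<in> ?D) \<longleftrightarrow> (\<forall>r\<in>{1..N}. int r \<in> ?D' \<longleftrightarrow> int r - 1 \<in> ?D)"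
    by (rule all_int_iff_all_period[OF N])
  show ?thesis
  proof (cases "d \<longleftrightarrow> N \<in> S \<and> N \<notin> S'")
    case True
    then have "(\<forall>i\<in>{1..N}. (i \<in> S' \<and> i \<notin> S) = (if i = 1 then d else (i - 1 \<in> S \<and> i - 1 \<notin> S')))
        \<longleftrightarrow> (\<forall>r\<in>{1..N}. int r \<in> ?D' \<longleftrightarrow> int r - 1 \<in> ?D)"
      using mem(2) pred by (intro ball_cong) auto
    then show ?thesis unfolding shift_move_def lifted using True by simp
  next
    case False
    then show ?thesis unfolding shift_move_def by blast
  qed
qed

lemma loop_shift:
  assumes "n \<ge> 1"
  shows "loop n k la d (i + m * int n) = loop n k la d i - m * int k"
proof -
  have e: "i + m * int n - d - 1 = (i - d - 1) + m * int n" by simp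
  have nz: "int n \<noteq> 0" using assms by simp
  show ?thesis unfolding loop_def e mod_mult_self1 div_mult_self1[OF nz] by (simp add: algebra_simps)
qed

lemma loop_one: "loop n k la 1 i = loop n k la 0 (i - 1) + 1"
  unfolding loop_def by (simp add: algebra_simps)

lemma loop_row:
  assumes "r \<in> {1..n}"
  shows "loop n k la 0 (int r) = int (la r)"
proof -
  have "(int r - 0 - 1) mod int n = int r - 1" "(int r - 0 - 1) div int n = 0" "nat (int r - 1) + 1 = r"
    using assms by auto
  then show ?thesis unfolding loop_def by simp
qed

lemma parts_D:
  assumes "la \<in> parts n k"
  shows "\<And>i. i \<in> {1..n} \<Longrightarrow> la i \<le> k"
    and "\<And>i j. 1 \<le> i \<Longrightarrow> i \<le> j \<Longrightarrow> j \<le> n \<Longrightarrow> la j \<le> la i"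
    and "\<And>i. i \<notin> {1..n} \<Longrightarrow> la i = 0"
proof -
  show "\<And>i. i \<in> {1..n} \<Longrightarrow> la i \<le> k" "\<And>i. i \<notin> {1..n} \<Longrightarrow> la i = 0"
    using assms by (auto simp: parts_def)
  fix i j :: nat assume ij: "1 \<le> i" "i \<le> j" "j \<le> n"
  have step: "\<forall>i. 1 \<le> i \<and> i < n \<longrightarrow> la (Suc i) \<le> la i" using assms by (auto simp: parts_def)
  have "la (i + m) \<le> la i" if "i + m \<le> n" for m
    using that
  proof (induction m)
    case (Suc m)
    then have "la (Suc (i + m)) \<le> la (i + m)" using step ij(1) by auto
    then show ?case using Suc by simp
  qed simp
  then show "la j \<le> la i" using ij le_Suc_ex by blast
qed

text \<open>\<open>lpos n k la\<close> enumerates \<open>Lift (n + k) (Iset n la)\<close> in decreasing order, starting with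
  \<open>lpos n k la 1 = la\<^sub>1 + n\<close>; it is the particle picture of the cylindric loop \<open>la[0]\<close>.\<close>

definition lpos :: "nat \<Rightarrow> nat \<Rightarrow> (nat \<Rightarrow> nat) \<Rightarrow> int \<Rightarrow> int" where
  "lpos n k la i = loop n k la 0 i + int n + 1 - i"

definition pos :: "nat \<Rightarrow> (nat \<Rightarrow> nat) \<Rightarrow> nat \<Rightarrow> nat" where
  "pos n la r = la r + n + 1 - r"

lemma lpos_shift: "n \<ge> 1 \<Longrightarrow> lpos n k la (i + m * int n) = lpos n k la i - m * int (n + k)"
  unfolding lpos_def loop_shift by (simp add: algebra_simps)

lemma lpos_row: "r \<in> {1..n} \<Longrightarrow> lpos n k la (int r) = int (pos n la r)"
  unfolding lpos_def pos_def loop_row by auto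

lemma loop_eq_lpos: "d \<in> {0, 1} \<Longrightarrow> loop n k la (int d) i + int n + 1 - i = lpos n k la (i - int d)"
  unfolding lpos_def by (auto simp: loop_one)

lemma lpos_dec1:
  assumes la: "la \<in> parts n k" and n: "n \<ge> 1"
  shows "lpos n k la (i + 1) < lpos n k la i"
proof -
  obtain r a where r: "r \<in> {1..n}" and i: "i = int r + a * int n" using int_decomp[OF n] by blast
  have row: "lpos n k la (int r) = int (la r + n + 1 - r)" if "r \<in> {1..n}" for r
    using lpos_row[OF that] by (simp add: pos_def)
  show ?thesis
  proof (cases "r < n")
    case True
    then have r1: "Suc r \<in> {1..n}" by auto
    have "i + 1 = int (Suc r) + a * int n" using i by simp
    then have "lpos n k la (i + 1) = lpos n k la (int (Suc r)) - a * int (n + k)" using lpos_shift[OF n] by metis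
    moreover have "lpos n k la i = lpos n k la (int r) - a * int (n + k)" using lpos_shift[OF n] i by metis
    moreover have "la (Suc r) \<le> la r" using parts_D(2)[OF la, of r "Suc r"] r True by auto
    ultimately show ?thesis using row[OF r1] row[OF r] r1 by simp
  next
    case False
    then have rn: "r = n" using r by auto
    have "i + 1 = int 1 + (a + 1) * int n" using i rn by (simp add: algebra_simps)
    then have "lpos n k la (i + 1) = lpos n k la (int 1) - (a + 1) * int (n + k)" using lpos_shift[OF n] by metis
    moreover have "lpos n k la i = lpos n k la (int n) - a * int (n + k)" using lpos_shift[OF n] i rn by metis
    moreover have "la 1 \<le> k" using parts_D(1)[OF la, of 1] n by auto
    moreover have "lpos n k la (int 1) = int (la 1 + n + 1 - 1)" by (rule row) (use n in simp)
    moreover have "lpos n k la (int n) = int (la n + n + 1 - n)" by (rule row) (use n in simp)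
    ultimately show ?thesis by (simp add: algebra_simps)
  qed
qed

lemma lpos_strict_dec:
  assumes "la \<in> parts n k" "n \<ge> 1" "i < j"
  shows "lpos n k la j < lpos n k la i"
  using strict_dec_gap[of "lpos n k la" i j] lpos_dec1[OF assms(1,2)] assms(3) by simp

lemma pos_bounds:
  assumes "la \<in> parts n k" "r \<in> {1..n}"
  shows "1 \<le> pos n la r" "pos n la r \<le> n + k"
  using parts_D(1)[OF assms] assms(2) unfolding pos_def by auto

lemma pos_strict_dec:
  assumes "la \<in> parts n k" "1 \<le> r" "r < r'" "r' \<le> n"
  shows "pos n la r' < pos n la r"
  using parts_D(2)[OF assms(1), of r r'] assms unfolding pos_def by auto

lemma Iset_pos: "Iset n la = pos n la ` {1..n}"
proof (intro equalityI subsetI)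
  fix x assume "x \<in> Iset n la"
  then obtain i where "i \<in> {1..n}" "x = la (n + 1 - i) + i" by (auto simp: Iset_def)
  then show "x \<in> pos n la ` {1..n}" unfolding pos_def by (intro image_eqI[of _ _ "n + 1 - i"]) auto
next
  fix x assume "x \<in> pos n la ` {1..n}"
  then obtain r where "r \<in> {1..n}" "x = la r + n + 1 - r" by (auto simp: pos_def)
  then show "x \<in> Iset n la" unfolding Iset_def by (intro CollectI exI[of _ "n + 1 - r"]) auto
qed

lemma pos_inj: "la \<in> parts n k \<Longrightarrow> inj_on (pos n la) {1..n}"
  by (rule inj_onI) (metis atLeastAtMost_iff linorder_neqE_nat pos_strict_dec less_irrefl)

lemma Iset_nsub:
  assumes "la \<in> parts n k"
  shows "Iset n la \<in> nsub n (n + k)"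
  using pos_bounds[OF assms] card_image[OF pos_inj[OF assms]] unfolding Iset_pos nsub_def by auto

lemma card_above_pos:
  assumes la: "la \<in> parts n k" and r: "r \<in> {1..n}"
  shows "card {y \<in> Iset n la. pos n la r < y} = r - 1"
proof -
  have "{y \<in> Iset n la. pos n la r < y} = pos n la ` {1..r - 1}"
  proof (intro equalityI subsetI)
    fix y assume "y \<in> {y \<in> Iset n la. pos n la r < y}"
    then obtain r' where r': "r' \<in> {1..n}" "y = pos n la r'" "pos n la r < pos n la r'"
      unfolding Iset_pos by auto
    then have "r' < r" using r pos_strict_dec[OF la, of r r'] by (cases "r' < r"; cases "r = r'") auto
    then show "y \<in> pos n la ` {1..r - 1}" using r' by auto
  next
    fix y assume "y \<in> pos n la ` {1..r - 1}"
    then show "y \<in> {y \<in> Iset n la. pos n la r < y}" using r pos_strict_dec[OF la] unfolding Iset_pos by auto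
  qed
  moreover have "inj_on (pos n la) {1..r - 1}" by (rule inj_on_subset[OF pos_inj[OF la]]) (use r in auto)
  ultimately show ?thesis by (simp add: card_image)
qed

lemma Iset_inj:
  assumes la: "la \<in> parts n k" and la': "la' \<in> parts n k" and eq: "Iset n la = Iset n la'"
  shows "la = la'"
proof
  fix r
  show "la r = la' r"
  proof (cases "r \<in> {1..n}")
    case True
    then have "pos n la' r \<in> Iset n la" using eq unfolding Iset_pos by auto
    then obtain r'' where r'': "r'' \<in> {1..n}" "pos n la' r = pos n la r''" unfolding Iset_pos by auto
    then have "r - 1 = r'' - 1" using card_above_pos[OF la' True] card_above_pos[OF la r''(1)] eq by simp
    then have "r = r''" using True r'' by auto
    then show ?thesis using r'' True unfolding pos_def by auto
  qed (use parts_D(3)[OF la] parts_D(3)[OF la'] in simp)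
qed

lemma parts_finite: "finite (parts n k)"
proof -
  let ?g = "\<lambda>la. map la [1..<n + 1]"
  have inj: "inj_on ?g (parts n k)"
  proof (rule inj_onI, rule ext)
    fix la la' r assume la: "la \<in> parts n k" and la': "la' \<in> parts n k" and eq: "?g la = ?g la'"
    show "la r = la' r"
    proof (cases "r \<in> {1..n}")
      case True
      then have "r \<in> set [1..<n + 1]" by auto
      then show ?thesis using eq by (metis map_eq_conv)
    qed (use parts_D(3)[OF la] parts_D(3)[OF la'] in simp)
  qed
  have "?g ` parts n k \<subseteq> {xs. set xs \<subseteq> {0..k} \<and> length xs = n}"
    using parts_D(1) by fastforce
  moreover have "finite {xs. set xs \<subseteq> {0..k::nat} \<and> length xs = n}" by (rule finite_lists_length_eq) simp
  ultimately have "finite (?g ` parts n k)" by (rule finite_subset)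
  then show ?thesis using inj by (rule finite_imageD)
qed

lemma pieri_pairs_finite: "finite (pieri_pairs n k mu)"
proof -
  have "pieri_pairs n k mu \<subseteq> parts n k \<times> {0, 1}" by (auto simp: pieri_pairs_def)
  then show ?thesis by (rule finite_subset) (simp add: parts_finite)
qed

lemma range_lpos:
  assumes la: "la \<in> parts n k" and n: "n \<ge> 1"
  shows "range (lpos n k la) = Lift (n + k) (Iset n la)"
proof (intro equalityI subsetI)
  fix x assume "x \<in> range (lpos n k la)"
  then obtain i where i: "x = lpos n k la i" by auto
  obtain r a where r: "r \<in> {1..n}" "i = int r + a * int n" using int_decomp[OF n] by blast
  have "x = int (pos n la r) + (- a) * int (n + k)"
    using i r lpos_shift[OF n, of k la "int r" a] lpos_row[OF r(1), of k la] by simp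
  then show "x \<in> Lift (n + k) (Iset n la)" unfolding Lift_def Iset_pos using r by blast
next
  fix x assume "x \<in> Lift (n + k) (Iset n la)"
  then obtain r m where r: "r \<in> {1..n}" "x = int (pos n la r) + m * int (n + k)"
    unfolding Lift_def Iset_pos by auto
  then have "lpos n k la (int r + (- m) * int n) = x"
    using lpos_shift[OF n, of k la "int r" "- m"] lpos_row[OF r(1), of k la] by simp
  then show "x \<in> range (lpos n k la)" by (metis rangeI)
qed

lemma lpos_in_range_imp_row:
  assumes mu: "mu \<in> parts n k" and n: "n \<ge> 1" and "1 \<le> lpos n k mu i" "lpos n k mu i \<le> int (n + k)"
  shows "\<exists>r. r \<in> {1..n} \<and> i = int r"
proof -
  have "1 \<in> {1..n}" "n \<in> {1..n}" "mu 1 \<le> k" using n parts_D(1)[OF mu, of 1] by auto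
  then have first: "lpos n k mu 1 = int (mu 1 + n)" and last: "lpos n k mu (int n) = int (mu n + 1)"
    using lpos_row[of 1 n k mu] lpos_row[of n n k mu] by (auto simp: pos_def)
  have "lpos n k mu 0 = lpos n k mu (int n) + int (n + k)"
    using lpos_shift[OF n, of k mu "int n" "- 1"] by simp
  then have "\<not> i \<le> 0"
    using lpos_strict_dec[OF mu n, of i 0] last assms(4) by (cases "i = 0") auto
  moreover have "lpos n k mu (1 + int n) = lpos n k mu 1 - int (n + k)"
    using lpos_shift[OF n, of k mu 1 1] by simp
  then have "\<not> i \<ge> 1 + int n"
    using lpos_strict_dec[OF mu n, of "1 + int n" i] first \<open>mu 1 \<le> k\<close> assms(3) by (cases "i = 1 + int n") auto
  ultimately show ?thesis by (intro exI[of _ "nat i"]) auto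
qed

lemma skew_lift_rows_iff:
  "(\<forall>i j j'. (i, j) \<in> skew_lift n k la d mu \<longrightarrow> (i, j') \<in> skew_lift n k la d mu \<longrightarrow> j = j')
    \<longleftrightarrow> (\<forall>i. loop n k la d i \<le> loop n k mu 0 i + 1)"
proof (intro iffI allI impI)
  fix i assume rows: "\<forall>i j j'. (i, j) \<in> skew_lift n k la d mu \<longrightarrow> (i, j') \<in> skew_lift n k la d mu \<longrightarrow> j = j'"
  show "loop n k la d i \<le> loop n k mu 0 i + 1"
  proof (rule ccontr)
    assume "\<not> loop n k la d i \<le> loop n k mu 0 i + 1"
    then have "(i, loop n k mu 0 i + 1) \<in> skew_lift n k la d mu" "(i, loop n k mu 0 i + 2) \<in> skew_lift n k la d mu"
      unfolding skew_lift_def by auto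
    then show False using rows[rule_format, of i "loop n k mu 0 i + 1" "loop n k mu 0 i + 2"] by simp
  qed
next
  fix i j j' assume hi: "\<forall>i. loop n k la d i \<le> loop n k mu 0 i + 1"
    and boxes: "(i, j) \<in> skew_lift n k la d mu" "(i, j') \<in> skew_lift n k la d mu"
  have "loop n k la d i \<le> loop n k mu 0 i + 1" using hi by blast
  moreover have "loop n k mu 0 i < j" "j \<le> loop n k la d i" "loop n k mu 0 i < j'" "j' \<le> loop n k la d i"
    using boxes unfolding skew_lift_def by auto
  ultimately show "j = j'" by linarith
qed

lemma skew_lift_cols_iff:
  assumes steps: "\<And>i. loop n k la d i - loop n k mu 0 i = 0 \<or> loop n k la d i - loop n k mu 0 i = 1"
  shows "(\<forall>i i' j. (i, j) \<in> skew_lift n k la d mu \<longrightarrow> (i', j) \<in> skew_lift n k la d mu \<longrightarrow> i = i')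
    \<longleftrightarrow> (\<forall>i i'. loop n k la d i - loop n k mu 0 i = 1 \<longrightarrow> loop n k la d i' - loop n k mu 0 i' = 1
          \<longrightarrow> loop n k mu 0 i = loop n k mu 0 i' \<longrightarrow> i = i')"
proof -
  let ?F = "loop n k mu 0" and ?G = "loop n k la d" and ?L = "skew_lift n k la d mu"
  have lift: "(i, j) \<in> ?L \<longleftrightarrow> ?G i \<ge> j \<and> j > ?F i" for i j
    by (simp add: skew_lift_def)
  have mem: "(i, j) \<in> ?L \<longleftrightarrow> ?G i - ?F i = 1 \<and> j = ?F i + 1" for i j
    unfolding lift using steps[of i] by auto
  show ?thesis
  proof (intro iffI allI impI)
    fix i i' assume cols: "\<forall>i i' j. (i, j) \<in> ?L \<longrightarrow> (i', j) \<in> ?L \<longrightarrow> i = i'"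
      and rows: "?G i - ?F i = 1" "?G i' - ?F i' = 1" "?F i = ?F i'"
    from rows have "(i, ?F i + 1) \<in> ?L" "(i', ?F i + 1) \<in> ?L" unfolding mem by auto
    then show "i = i'" using cols[rule_format, of i "?F i + 1" i'] by simp
  next
    fix i i' j assume boxes: "(i, j) \<in> ?L" "(i', j) \<in> ?L"
      and distinct: "\<forall>i i'. ?G i - ?F i = 1 \<longrightarrow> ?G i' - ?F i' = 1 \<longrightarrow> ?F i = ?F i' \<longrightarrow> i = i'"
    from boxes have "?G i - ?F i = 1" "?G i' - ?F i' = 1" "?F i = ?F i'" unfolding mem by auto
    then show "i = i'" using distinct[rule_format, of i i'] by simp
  qed
qed

lemma pieri_pairs_iff:
  "(la, d) \<in> pieri_pairs n k mu \<longleftrightarrow> la \<in> parts n k \<and> d \<in> {0, 1}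
     \<and> (\<forall>i. loop n k la (int d) i - loop n k mu 0 i = 0 \<or> loop n k la (int d) i - loop n k mu 0 i = 1)
     \<and> (\<forall>i i'. loop n k la (int d) i - loop n k mu 0 i = 1 \<longrightarrow> loop n k la (int d) i' - loop n k mu 0 i' = 1
          \<longrightarrow> loop n k mu 0 i = loop n k mu 0 i' \<longrightarrow> i = i')"
    (is "_ \<longleftrightarrow> _ \<and> _ \<and> ?steps \<and> ?distinct")
proof -
  let ?F = "loop n k mu 0" and ?G = "loop n k la (int d)" and ?L = "skew_lift n k la (int d) mu"
  let ?cols = "\<forall>i i' j. (i, j) \<in> ?L \<longrightarrow> (i', j) \<in> ?L \<longrightarrow> i = i'"
  have def: "(la, d) \<in> pieri_pairs n k mu \<longleftrightarrow> la \<in> parts n k \<and> d \<in> {0, 1}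
      \<and> (\<forall>i. ?F i \<le> ?G i) \<and> (\<forall>i. ?G i \<le> ?F i + 1) \<and> ?cols"
    unfolding pieri_pairs_def skew_lift_rows_iff[symmetric] by simp
  have steps_iff: "(\<forall>i. ?F i \<le> ?G i) \<and> (\<forall>i. ?G i \<le> ?F i + 1) \<longleftrightarrow> ?steps"
  proof -
    have "?F i \<le> ?G i \<and> ?G i \<le> ?F i + 1 \<longleftrightarrow> ?G i - ?F i = 0 \<or> ?G i - ?F i = 1" for i by linarith
    then show ?thesis by (simp add: all_conj_distrib[symmetric])
  qed
  show ?thesis
  proof
    assume "(la, d) \<in> pieri_pairs n k mu"
    then have "la \<in> parts n k" "d \<in> {0, 1}" and steps: ?steps and cols: ?cols
      unfolding def steps_iff[symmetric] by simp_all
    moreover have ?distinct by (rule iffD1[OF skew_lift_cols_iff[OF steps[rule_format]] cols])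
    ultimately show "la \<in> parts n k \<and> d \<in> {0, 1} \<and> ?steps \<and> ?distinct" by (intro conjI)
  next
    assume R: "la \<in> parts n k \<and> d \<in> {0, 1} \<and> ?steps \<and> ?distinct"
    note steps = R[THEN conjunct2, THEN conjunct2, THEN conjunct1]
      and distinct = R[THEN conjunct2, THEN conjunct2, THEN conjunct2]
    have cols: ?cols by (rule iffD2[OF skew_lift_cols_iff[OF steps[rule_format]] distinct])
    have lohi: "(\<forall>i. ?F i \<le> ?G i) \<and> (\<forall>i. ?G i \<le> ?F i + 1)" by (rule iffD2[OF steps_iff steps])
    show "(la, d) \<in> pieri_pairs n k mu"
      unfolding def by (intro conjI R[THEN conjunct1] R[THEN conjunct2, THEN conjunct1] cols
          lohi[THEN conjunct1] lohi[THEN conjunct2])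
  qed
qed

lemma cyl_rel_Image: "cyl_rel n k `` {(i, j)} = {(i + m * int n, j - m * int k) | m. True}"
  unfolding cyl_rel_def by auto

lemma cyl_rel_Image_shift: "cyl_rel n k `` {(i + a * int n, j - a * int k)} = cyl_rel n k `` {(i, j)}"
proof -
  have "(\<exists>m. x = (i + a * int n + m * int n, j - a * int k - m * int k))
      \<longleftrightarrow> (\<exists>m. x = (i + m * int n, j - m * int k))" for x
    by (metis (no_types, opaque_lifting) add.assoc diff_diff_eq distrib_right add_diff_cancel_left' diff_add_cancel)
  then show ?thesis unfolding cyl_rel_Image by auto
qed

text \<open>When every row of \<open>la[d]\<close> exceeds that of \<open>mu[0]\<close> by at most one, the boxes of \<open>la/d/mu\<close> modulo
  the shift are represented by the rows \<open>r \<in> {1..n}\<close> with one added box.\<close>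

lemma skew_size_eq_card_rows:
  assumes n: "n \<ge> 1"
    and steps: "\<And>i. loop n k la d i - loop n k mu 0 i = 0 \<or> loop n k la d i - loop n k mu 0 i = 1"
  shows "skew_size n k la d mu = card {r \<in> {1..n}. loop n k la d (int r) - loop n k mu 0 (int r) = 1}"
proof -
  let ?F = "loop n k mu 0" and ?G = "loop n k la d" and ?L = "skew_lift n k la d mu"
  let ?R = "{r \<in> {1..n}. ?G (int r) - ?F (int r) = 1}"
  have mem: "(i, j) \<in> ?L \<longleftrightarrow> ?G i - ?F i = 1 \<and> j = ?F i + 1" for i j
    unfolding skew_lift_def using steps[of i] by auto
  define cls where "cls r = cyl_rel n k `` {(int r, ?F (int r) + 1)}" for r
  have "bij_betw cls ?R (?L // cyl_rel n k)"
  proof (rule bij_betw_imageI)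
    show "inj_on cls ?R"
    proof (rule inj_onI)
      fix r r' assume r: "r \<in> ?R" and r': "r' \<in> ?R" and "cls r = cls r'"
      then have "(int r', ?F (int r') + 1) \<in> cls r" unfolding cls_def cyl_rel_Image by (auto intro: exI[of _ 0])
      then obtain m where "int r' = int r + m * int n" unfolding cls_def cyl_rel_Image by auto
      then show "r = r'" using eq_add_mult_bounded[of r' n r m] r r' by simp
    qed
  next
    show "cls ` ?R = ?L // cyl_rel n k"
    proof (intro equalityI subsetI)
      fix X assume "X \<in> cls ` ?R"
      then obtain r where r: "r \<in> ?R" "X = cls r" by auto
      then have "(int r, ?F (int r) + 1) \<in> ?L" unfolding mem by auto
      then show "X \<in> ?L // cyl_rel n k" unfolding r(2) cls_def by (rule quotientI)
    next
      fix X assume "X \<in> ?L // cyl_rel n k"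
      then obtain i j where ij: "(i, j) \<in> ?L" "X = cyl_rel n k `` {(i, j)}" by (auto elim!: quotientE)
      obtain r a where r: "r \<in> {1..n}" "i = int r + a * int n" using int_decomp[OF n] by blast
      have row: "?G (int r) - ?F (int r) = 1" and pt: "(i, j) = (int r + a * int n, ?F (int r) + 1 - a * int k)"
        using ij(1) r(2) loop_shift[OF n] unfolding mem by auto
      have "X = cls r" unfolding ij(2) pt cls_def by (rule cyl_rel_Image_shift)
      then show "X \<in> cls ` ?R" using r(1) row by blast
    qed
  qed
  then show ?thesis unfolding skew_size_def by (simp add: bij_betw_same_card)
qed

lemma pieri_pair_lifted:
  assumes n: "n \<ge> 1" and mu: "mu \<in> parts n k" and P: "(la, d) \<in> pieri_pairs n k mu"
  shows "Lift (n + k) (Iset n mu) - Lift (n + k) (Iset n la)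
      = lpos n k mu ` {i. loop n k la (int d) i - loop n k mu 0 i = 1}"
    and "Lift (n + k) (Iset n la) - Lift (n + k) (Iset n mu)
      = (\<lambda>i. lpos n k mu i + 1) ` {i. loop n k la (int d) i - loop n k mu 0 i = 1}"
proof -
  define F where "F = loop n k mu 0"
  define G where "G = loop n k la (int d)"
  define e where "e i = G i - F i" for i
  define f where "f = lpos n k mu"
  from P have la: "la \<in> parts n k" and d: "d \<in> {0, 1}"
    and steps: "\<And>i. e i = 0 \<or> e i = 1"
    and distinct: "\<And>i i'. G i - F i = 1 \<Longrightarrow> G i' - F i' = 1 \<Longrightarrow> F i = F i' \<Longrightarrow> i = i'"
    unfolding pieri_pairs_iff e_def F_def G_def by blast+
  have f': "f = (\<lambda>i. F i + (int n + 1) - i)" unfolding f_def F_def lpos_def by (auto simp: algebra_simps)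
  have shifted: "f i + e i = lpos n k la (i - int d)" for i
    using loop_eq_lpos[OF d, of n k la i] unfolding f' e_def G_def by (simp add: algebra_simps)
  have decF: "F (i + 1) + (int n + 1) - (i + 1) < F i + (int n + 1) - i" for i
    using lpos_dec1[OF mu n, of i] unfolding f' f_def[symmetric] by simp
  have decG: "G (i + 1) + (int n + 1) - (i + 1) < G i + (int n + 1) - i" for i
  proof -
    have "lpos n k la (i + 1 - int d) < lpos n k la (i - int d)"
      using lpos_dec1[OF la n, of "i - int d"] by (simp add: algebra_simps)
    then show ?thesis using loop_eq_lpos[OF d, of n k la i] loop_eq_lpos[OF d, of n k la "i + 1"]
      unfolding G_def by (simp add: algebra_simps)
  qed
  have free: "f i + 1 \<notin> range f" if "e i = 1" for i
    using free_target_if_distinct_columns[of F "int n + 1" G, OF decF decG steps[unfolded e_def] distinct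
        that[unfolded e_def]]
    unfolding f' .
  have fdec: "i < j \<Longrightarrow> f j < f i" for i j unfolding f_def by (rule lpos_strict_dec[OF mu n])
  note moved = range_move_removed[where f = f and e = e, OF fdec steps free]
    range_move_added[where f = f and e = e, OF steps free]
  have "range (\<lambda>i. f i + e i) = range (\<lambda>i. lpos n k la (i - int d))" unfolding shifted ..
  also have "\<dots> = range (lpos n k la)" by (rule range_shift)
  finally have "range (\<lambda>i. f i + e i) = Lift (n + k) (Iset n la)" using range_lpos[OF la n] by simp
  moreover have "{i. e i = 1} = {i. loop n k la (int d) i - loop n k mu 0 i = 1}"
    unfolding e_def F_def G_def ..
  ultimately show "Lift (n + k) (Iset n mu) - Lift (n + k) (Iset n la)
      = lpos n k mu ` {i. loop n k la (int d) i - loop n k mu 0 i = 1}"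
    and "Lift (n + k) (Iset n la) - Lift (n + k) (Iset n mu)
      = (\<lambda>i. lpos n k mu i + 1) ` {i. loop n k la (int d) i - loop n k mu 0 i = 1}"
    using moved range_lpos[OF mu n] unfolding f_def by simp_all
qed

lemma pos_eq_top_iff:
  assumes la: "la \<in> parts n k" and r: "r \<in> {1..n}"
  shows "pos n la r = n + k \<longleftrightarrow> r = 1 \<and> la 1 = k"
proof
  assume top: "pos n la r = n + k"
  have "pos n la 1 \<le> n + k" using pos_bounds[OF la, of 1] r by auto
  moreover have "pos n la r < pos n la 1" if "r \<noteq> 1" using pos_strict_dec[OF la, of 1 r] r that by auto
  ultimately have "r = 1" using top by fastforce
  then show "r = 1 \<and> la 1 = k" using top by (simp add: pos_def)
qed (simp add: pos_def)

lemma pieri_pair_first_row: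
  assumes n: "n \<ge> 1" and mu: "mu \<in> parts n k" and P: "(la, d) \<in> pieri_pairs n k mu"
  shows "d = 1 \<longleftrightarrow> loop n k la (int d) 1 - loop n k mu 0 1 = 1 \<and> mu 1 = k"
proof -
  have la: "la \<in> parts n k" and d: "d \<in> {0, 1}"
    and step: "loop n k la (int d) 1 - loop n k mu 0 1 = 0 \<or> loop n k la (int d) 1 - loop n k mu 0 1 = 1"
    using P unfolding pieri_pairs_iff by blast+
  have row1: "loop n k mu 0 1 = int (mu 1)" "mu 1 \<le> k" "la 1 \<le> k"
    using loop_row[of 1 n k mu] parts_D(1)[OF mu, of 1] parts_D(1)[OF la, of 1] n by auto
  show ?thesis
  proof (cases "d = 0")
    case True
    then show ?thesis using loop_row[of 1 n k la] row1 n by auto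
  next
    case False
    then have d1: "d = 1" using d by simp
    have "loop n k la 0 (int n + (- 1) * int n) = int (la n) + int k"
      using loop_shift[OF n, of k la 0 "int n" "- 1"] loop_row[of n n k la] n by simp
    then have "loop n k la (int d) 1 = int (la n) + int k + 1" using loop_one[of n k la 1] d1 by simp
    then show ?thesis using step row1 d1 by auto
  qed
qed

lemma pieri_pair_winding:
  assumes n: "n \<ge> 1" and mu: "mu \<in> parts n k" and P: "(la, d) \<in> pieri_pairs n k mu"
  shows "d = 1 \<longleftrightarrow> n + k \<in> Iset n mu \<and> n + k \<notin> Iset n la"
proof -
  let ?N = "n + k"
  define e where "e i = loop n k la (int d) i - loop n k mu 0 i" for i
  have la: "la \<in> parts n k" using P unfolding pieri_pairs_def by auto
  have sub: "Iset n mu \<subseteq> {1..?N}" "Iset n la \<subseteq> {1..?N}" "?N \<in> {1..?N}"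
    using Iset_nsub[OF mu] Iset_nsub[OF la] n by (auto simp: nsub_def)
  have "d = 1 \<longleftrightarrow> e 1 = 1 \<and> mu 1 = k" unfolding e_def by (rule pieri_pair_first_row[OF n mu P])
  also have "\<dots> \<longleftrightarrow> (\<exists>i. e i = 1 \<and> lpos n k mu i = int ?N)"
  proof
    assume "e 1 = 1 \<and> mu 1 = k"
    moreover have "lpos n k mu 1 = int (pos n mu 1)" using lpos_row[of 1 n k mu] n by simp
    ultimately show "\<exists>i. e i = 1 \<and> lpos n k mu i = int ?N" by (auto simp: pos_def)
  next
    assume "\<exists>i. e i = 1 \<and> lpos n k mu i = int ?N"
    then obtain i where i: "e i = 1" "lpos n k mu i = int ?N" by blast
    then obtain r where r: "r \<in> {1..n}" "i = int r" using lpos_in_range_imp_row[OF mu n, of i] n by auto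
    then have "pos n mu r = ?N" using i(2) lpos_row[of r n k mu] by simp
    then show "e 1 = 1 \<and> mu 1 = k" using pos_eq_top_iff[OF mu r(1)] i(1) r(2) by simp
  qed
  also have "\<dots> \<longleftrightarrow> int ?N \<in> Lift ?N (Iset n mu) - Lift ?N (Iset n la)"
    unfolding pieri_pair_lifted(1)[OF n mu P] e_def by (auto simp: image_iff)
  also have "\<dots> \<longleftrightarrow> ?N \<in> Iset n mu \<and> ?N \<notin> Iset n la"
    using Lift_mem[OF sub(1,3)] Lift_mem[OF sub(2,3)] by simp
  finally show ?thesis .
qed

lemma card_Diff_sym:
  assumes "finite A" "finite B" "card A = card B"
  shows "card (A - B) = card (B - A)"
  using assms by (simp add: card_Diff_subset_Int Int_commute)

lemma pieri_pair_skew_size: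
  assumes n: "n \<ge> 1" and mu: "mu \<in> parts n k" and P: "(la, d) \<in> pieri_pairs n k mu"
  shows "skew_size n k la (int d) mu = card (Iset n la - Iset n mu)"
proof -
  let ?N = "n + k" and ?R = "{r \<in> {1..n}. loop n k la (int d) (int r) - loop n k mu 0 (int r) = 1}"
  have la: "la \<in> parts n k"
    and steps: "\<And>i. loop n k la (int d) i - loop n k mu 0 i = 0 \<or> loop n k la (int d) i - loop n k mu 0 i = 1"
    using P unfolding pieri_pairs_iff by blast+
  have sub: "Iset n mu \<subseteq> {1..?N}" "Iset n la \<subseteq> {1..?N}" "card (Iset n mu) = n" "card (Iset n la) = n"
    using Iset_nsub[OF mu] Iset_nsub[OF la] by (auto simp: nsub_def)
  have mem: "y \<in> Iset n mu - Iset n la \<longleftrightarrow> int y \<in> lpos n k mu ` {i. loop n k la (int d) i - loop n k mu 0 i = 1}"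
    if "y \<in> {1..?N}" for y
    using Lift_mem[OF sub(1) that] Lift_mem[OF sub(2) that] pieri_pair_lifted(1)[OF n mu P] by auto
  have "Iset n mu - Iset n la = pos n mu ` ?R"
  proof (intro equalityI subsetI)
    fix y assume y: "y \<in> Iset n mu - Iset n la"
    then have "y \<in> {1..?N}" using sub by auto
    then obtain i where i: "loop n k la (int d) i - loop n k mu 0 i = 1" "lpos n k mu i = int y"
      using mem y by auto
    moreover have "1 \<le> lpos n k mu i" "lpos n k mu i \<le> int ?N" using i(2) \<open>y \<in> {1..?N}\<close> by auto
    ultimately obtain r where "r \<in> {1..n}" "i = int r" using lpos_in_range_imp_row[OF mu n, of i] by auto
    then show "y \<in> pos n mu ` ?R" using i lpos_row[of r n k mu] by force
  next
    fix y assume "y \<in> pos n mu ` ?R"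
    then obtain r where r: "r \<in> ?R" "y = pos n mu r" by auto
    then have "y \<in> {1..?N}" using pos_bounds[OF mu] by auto
    then show "y \<in> Iset n mu - Iset n la" using mem r lpos_row[of r n k mu] by force
  qed
  moreover have "inj_on (pos n mu) ?R" by (rule inj_on_subset[OF pos_inj[OF mu]]) auto
  ultimately have "card (Iset n mu - Iset n la) = card ?R" by (simp add: card_image)
  then show ?thesis
    using skew_size_eq_card_rows[OF n steps] card_Diff_sym[of "Iset n la" "Iset n mu"] sub finite_subset
    by (metis finite_atLeastAtMost)
qed

lemma pieri_pair_imp_shift_move:
  assumes n: "n \<ge> 1" and mu: "mu \<in> parts n k" and P: "(la, d) \<in> pieri_pairs n k mu"
  shows "shift_move (n + k) (d = 1) (Iset n la) (Iset n mu)"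
proof -
  have la: "la \<in> parts n k" using P unfolding pieri_pairs_def by auto
  have "x \<in> Lift (n + k) (Iset n la) - Lift (n + k) (Iset n mu)
      \<longleftrightarrow> x - 1 \<in> Lift (n + k) (Iset n mu) - Lift (n + k) (Iset n la)" for x
    unfolding pieri_pair_lifted[OF n mu P] by force
  then show ?thesis
    using shift_move_iff_Lift Iset_nsub[OF mu] Iset_nsub[OF la] pieri_pair_winding[OF n mu P] n
    by (auto simp: nsub_def)
qed

lemma lpos_surj:
  fixes g :: "int \<Rightarrow> int" and c :: int
  assumes n: "n \<ge> 1" and dec: "\<forall>i. g (i + 1) < g i"
    and period: "\<And>i a. g (i + a * int n) = g i - a * int (n + k)"
    and top: "g (1 + c) \<le> int (n + k)" and bottom: "1 \<le> g (int n + c)"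
  obtains la where "la \<in> parts n k" "\<And>j. lpos n k la j = g (j + c)"
proof -
  have above: "1 + int n - int r \<le> g (int r + c)" if "r \<in> {1..n}" for r
    using strict_dec_gap[OF dec, of "int r + c" "int n + c"] that bottom by auto
  have below: "g (int r + c) \<le> int (n + k) - int r + 1" if "r \<in> {1..n}" for r
    using strict_dec_gap[OF dec, of "1 + c" "int r + c"] that top by auto
  define la where "la r = (if r \<in> {1..n} then nat (g (int r + c) - int n - 1 + int r) else 0)" for r
  have la_val: "int (la r) = g (int r + c) - int n - 1 + int r" if "r \<in> {1..n}" for r
    using above[OF that] that unfolding la_def by auto
  have "la \<in> parts n k"
    unfolding parts_def
  proof (intro CollectI conjI ballI allI impI)
    fix i assume "i \<in> {1..n}"
    then show "la i \<le> k" using la_val below by fastforce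
  next
    fix i assume i: "1 \<le> i \<and> i < n"
    then have "g (int (Suc i) + c) < g (int i + c)" using spec[OF dec, of "int i + c"] by (simp add: algebra_simps)
    then show "la (Suc i) \<le> la i" using la_val[of i] la_val[of "Suc i"] i by simp
  qed (auto simp: la_def)
  moreover have "lpos n k la j = g (j + c)" for j
  proof -
    obtain r a where r: "r \<in> {1..n}" "j = int r + a * int n" using int_decomp[OF n] by blast
    have "lpos n k la j = int (pos n la r) - a * int (n + k)" using lpos_shift[OF n] lpos_row[OF r(1)] r(2) by simp
    also have "\<dots> = g (int r + c) - a * int (n + k)" using la_val[OF r(1)] r(1) by (simp add: pos_def)
    also have "\<dots> = g (j + c)" using period[of "int r + c" a] r(2) by (simp add: algebra_simps)
    finally show ?thesis .
  qed
  ultimately show thesis using that by blast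
qed

definition moved_lpos :: "nat \<Rightarrow> nat \<Rightarrow> (nat \<Rightarrow> nat) \<Rightarrow> nat set \<Rightarrow> int \<Rightarrow> int" where
  "moved_lpos n k mu S' i = lpos n k mu i
     + (if lpos n k mu i \<in> Lift (n + k) (Iset n mu) - Lift (n + k) S' then 1 else 0)"

lemma moved_lpos_shift:
  assumes "n \<ge> 1"
  shows "moved_lpos n k mu S' (i + a * int n) = moved_lpos n k mu S' i - a * int (n + k)"
proof -
  have "lpos n k mu (i + a * int n) = lpos n k mu i + (- a) * int (n + k)"
    using lpos_shift[OF assms, of k mu i a] by simp
  then show ?thesis
    unfolding moved_lpos_def using Lift_shift[of "lpos n k mu i" "- a" "n + k"] by simp
qed

lemma shift_move_free_target:
  assumes n: "n \<ge> 1" and mu: "mu \<in> parts n k" and S': "S' \<subseteq> {1..n + k}"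
    and move: "shift_move (n + k) b S' (Iset n mu)" and moved: "moved_lpos n k mu S' i = lpos n k mu i + 1"
  shows "lpos n k mu i + 1 \<notin> range (lpos n k mu)"
proof -
  let ?LS = "Lift (n + k) (Iset n mu)" and ?LS' = "Lift (n + k) S'"
  have sub: "Iset n mu \<subseteq> {1..n + k}" using Iset_nsub[OF mu] by (auto simp: nsub_def)
  have "lpos n k mu i \<in> ?LS - ?LS'" using moved unfolding moved_lpos_def by (auto split: if_splits)
  then have "lpos n k mu i + 1 \<in> ?LS' - ?LS" using move shift_move_iff_Lift[OF sub S'] n by auto
  then show ?thesis using range_lpos[OF mu n] by simp
qed

lemma shift_move_moved_lpos_dec:
  assumes n: "n \<ge> 1" and mu: "mu \<in> parts n k" and S': "S' \<subseteq> {1..n + k}"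
    and move: "shift_move (n + k) b S' (Iset n mu)"
  shows "\<forall>i. moved_lpos n k mu S' (i + 1) < moved_lpos n k mu S' i"
proof
  fix i
  let ?f = "lpos n k mu" and ?g = "moved_lpos n k mu S'"
  have "?g j = ?f j \<or> ?g j = ?f j + 1" for j unfolding moved_lpos_def by simp
  moreover have "\<not> (?g (i + 1) = ?f (i + 1) + 1 \<and> ?f (i + 1) + 1 = ?f i)"
    using shift_move_free_target[OF n mu S' move, of "i + 1"] by (metis rangeI)
  moreover have "?f (i + 1) < ?f i" using lpos_strict_dec[OF mu n, of i "i + 1"] by simp
  ultimately show "?g (i + 1) < ?g i" by (smt (verit))
qed

lemma range_moved_lpos:
  assumes n: "n \<ge> 1" and mu: "mu \<in> parts n k" and S': "S' \<subseteq> {1..n + k}"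
    and move: "shift_move (n + k) b S' (Iset n mu)"
  shows "range (moved_lpos n k mu S') = Lift (n + k) S'"
proof -
  let ?LS = "Lift (n + k) (Iset n mu)" and ?LS' = "Lift (n + k) S'"
  define f where "f = lpos n k mu"
  define e where "e i = moved_lpos n k mu S' i - f i" for i
  have g: "moved_lpos n k mu S' = (\<lambda>i. f i + e i)" unfolding e_def by auto
  have e: "e i = (if f i \<in> ?LS - ?LS' then 1 else 0)" for i unfolding e_def f_def moved_lpos_def by simp
  have sub: "Iset n mu \<subseteq> {1..n + k}" using Iset_nsub[OF mu] by (auto simp: nsub_def)
  have PV: "x \<in> ?LS' - ?LS \<longleftrightarrow> x - 1 \<in> ?LS - ?LS'" for x
    using move shift_move_iff_Lift[OF sub S'] n by auto
  have rf: "range f = ?LS" unfolding f_def by (rule range_lpos[OF mu n])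
  have steps: "e i = 0 \<or> e i = 1" for i unfolding e by simp
  have free: "f i + 1 \<notin> range f" if "e i = 1" for i
    using shift_move_free_target[OF n mu S' move, of i] that unfolding e_def f_def by simp
  have fdec: "i < j \<Longrightarrow> f j < f i" for i j unfolding f_def by (rule lpos_strict_dec[OF mu n])
  have removed: "f ` {i. e i = 1} = ?LS - ?LS'"
    using rf unfolding e by (auto split: if_splits)
  have added: "(\<lambda>i. f i + 1) ` {i. e i = 1} = ?LS' - ?LS"
  proof (intro equalityI subsetI)
    fix x assume "x \<in> (\<lambda>i. f i + 1) ` {i. e i = 1}"
    then have "x - 1 \<in> f ` {i. e i = 1}" by force
    then show "x \<in> ?LS' - ?LS" using PV removed by simp
  next
    fix x assume "x \<in> ?LS' - ?LS"
    then have "x - 1 \<in> f ` {i. e i = 1}" using PV removed by simp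
    then show "x \<in> (\<lambda>i. f i + 1) ` {i. e i = 1}" by (force intro: image_eqI)
  qed
  have "?LS - range (\<lambda>i. f i + e i) = ?LS - ?LS'"
    using range_move_removed[where f = f and e = e, OF fdec steps free] removed rf by simp
  moreover have "range (\<lambda>i. f i + e i) - ?LS = ?LS' - ?LS"
    using range_move_added[where f = f and e = e, OF steps free] added rf by simp
  ultimately show ?thesis unfolding g by blast
qed

lemma lpos_one_eq_top:
  assumes "n \<ge> 1" "mu \<in> parts n k" "n + k \<in> Iset n mu"
  shows "lpos n k mu 1 = int (n + k)"
proof -
  obtain r where "r \<in> {1..n}" "pos n mu r = n + k" using assms(3) unfolding Iset_pos by auto
  then have "mu 1 = k" using pos_eq_top_iff[OF assms(2)] by auto
  then show ?thesis using lpos_row[of 1 n k mu] assms(1) by (simp add: pos_def)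
qed

text \<open>The winding \<open>d\<close> of the shift move fixes which period of \<open>moved_lpos\<close> lies in \<open>{1..n + k}\<close>.\<close>

lemma shift_move_moved_lpos_upper:
  assumes n: "n \<ge> 1" and mu: "mu \<in> parts n k" and d: "d \<in> {0, 1}" and S': "S' \<subseteq> {1..n + k}"
    and move: "shift_move (n + k) (d = 1) S' (Iset n mu)"
  shows "moved_lpos n k mu S' (1 + int d) \<le> int (n + k)"
proof (cases "d = 0")
  case True
  let ?N = "n + k"
  have sub: "Iset n mu \<subseteq> {1..?N}" using Iset_nsub[OF mu] by (auto simp: nsub_def)
  have first: "lpos n k mu 1 = int (mu 1 + n)" "mu 1 \<le> k"
    using lpos_row[of 1 n k mu] parts_D(1)[OF mu, of 1] n by (auto simp: pos_def)
  have not_top: "int ?N \<notin> Lift ?N (Iset n mu) - Lift ?N S'"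
    using True move Lift_mem[OF sub, of ?N] Lift_mem[OF S', of ?N] n unfolding shift_move_def by auto
  have "lpos n k mu 1 + 1 \<le> int ?N" if "lpos n k mu 1 \<in> Lift ?N (Iset n mu) - Lift ?N S'"
  proof (rule ccontr)
    assume "\<not> lpos n k mu 1 + 1 \<le> int ?N"
    then have "lpos n k mu 1 = int ?N" using first by simp
    then show False using not_top that by simp
  qed
  then show ?thesis using True first unfolding moved_lpos_def by auto
next
  case False
  then have top: "n + k \<in> Iset n mu" and "d = 1" using move d unfolding shift_move_def by auto
  have "lpos n k mu 1 = int (n + k)" by (rule lpos_one_eq_top[OF n mu top])
  moreover have "lpos n k mu 2 < lpos n k mu 1" using lpos_strict_dec[OF mu n, of 1 2] by simp
  moreover have "moved_lpos n k mu S' 2 \<noteq> lpos n k mu 2 + 1 \<or> lpos n k mu 2 + 1 \<noteq> lpos n k mu 1"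
    using shift_move_free_target[OF n mu S' move, of 2] by (metis rangeI)
  ultimately show ?thesis using \<open>d = 1\<close> unfolding moved_lpos_def by (auto split: if_splits)
qed

lemma shift_move_moved_lpos_lower:
  assumes n: "n \<ge> 1" and mu: "mu \<in> parts n k" and d: "d \<in> {0, 1}" and S': "S' \<subseteq> {1..n + k}"
    and move: "shift_move (n + k) (d = 1) S' (Iset n mu)"
  shows "1 \<le> moved_lpos n k mu S' (int n + int d)"
proof (cases "d = 0")
  case True
  have "lpos n k mu (int n) = int (mu n + 1)" using lpos_row[of n n k mu] n by (simp add: pos_def)
  then show ?thesis using True unfolding moved_lpos_def by auto
next
  case False
  let ?N = "n + k"
  have sub: "Iset n mu \<subseteq> {1..?N}" using Iset_nsub[OF mu] by (auto simp: nsub_def)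
  have "?N \<in> Iset n mu" "?N \<notin> S'" "d = 1" using False move d unfolding shift_move_def by auto
  moreover have "lpos n k mu 1 = int ?N" using lpos_one_eq_top[OF n mu \<open>?N \<in> Iset n mu\<close>] .
  ultimately have "moved_lpos n k mu S' 1 = int ?N + 1"
    using Lift_mem[OF sub, of ?N] Lift_mem[OF S', of ?N] n unfolding moved_lpos_def by simp
  then show ?thesis using moved_lpos_shift[OF n, of k mu S' 1 1] \<open>d = 1\<close> by (simp add: add.commute)
qed

lemma shift_move_imp_pieri_pair:
  assumes n: "n \<ge> 1" and mu: "mu \<in> parts n k" and d: "d \<in> {0, 1}" and S': "S' \<in> nsub n (n + k)"
    and move: "shift_move (n + k) (d = 1) S' (Iset n mu)"
  shows "\<exists>la. Iset n la = S' \<and> (la, d) \<in> pieri_pairs n k mu"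
proof -
  let ?N = "n + k" and ?g = "moved_lpos n k mu S'"
  have sub: "S' \<subseteq> {1..?N}" using S' by (auto simp: nsub_def)
  obtain la where la: "la \<in> parts n k" "\<And>j. lpos n k la j = ?g (j + int d)"
    using lpos_surj[OF n shift_move_moved_lpos_dec[OF n mu sub move] moved_lpos_shift[OF n]]
      shift_move_moved_lpos_upper[OF n mu d sub move] shift_move_moved_lpos_lower[OF n mu d sub move]
    by blast
  have "Lift ?N (Iset n la) = range (\<lambda>j. ?g (j - (- int d)))" using range_lpos[OF la(1) n] la(2) by simp
  also have "\<dots> = Lift ?N S'" unfolding range_shift by (rule range_moved_lpos[OF n mu sub move])
  finally have "Iset n la = S'"
    using Lift_mem[of "Iset n la" ?N] Lift_mem[OF sub] Iset_nsub[OF la(1)] sub by (auto simp: nsub_def)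
  moreover have "(la, d) \<in> pieri_pairs n k mu"
  proof -
    define e where "e i = ?g i - lpos n k mu i" for i
    have diff: "loop n k la (int d) i - loop n k mu 0 i = e i" for i
      using loop_eq_lpos[OF d, of n k la i] la(2)[of "i - int d"] unfolding e_def lpos_def by simp
    have steps: "e i = 0 \<or> e i = 1" for i unfolding e_def moved_lpos_def by simp
    have decF: "loop n k mu 0 (i + 1) + (int n + 1) - (i + 1) < loop n k mu 0 i + (int n + 1) - i" for i
      using lpos_dec1[OF mu n, of i] unfolding lpos_def by (simp add: algebra_simps)
    have free: "loop n k mu 0 i + (int n + 1) - i + 1 \<notin> range (\<lambda>i. loop n k mu 0 i + (int n + 1) - i)"
      if "loop n k la (int d) i - loop n k mu 0 i = 1" for i
      using shift_move_free_target[OF n mu sub move, of i] that unfolding diff e_def lpos_def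
      by (simp add: algebra_simps)
    have distinct: "i = i'" if "e i = 1" "e i' = 1" "loop n k mu 0 i = loop n k mu 0 i'" for i i'
      using distinct_columns_if_free_target[of "loop n k mu 0" "int n + 1" "loop n k la (int d)", OF decF free]
        that unfolding diff by blast
    show ?thesis
      unfolding pieri_pairs_iff diff using la(1) d steps distinct by blast
  qed
  ultimately show ?thesis by blast
qed

section \<open>The Pieri rule\<close>

text \<open>The Pieri pairs \<open>(la, d)\<close> with \<open>Iset n la = S'\<close> correspond, via \<open>d\<close>, to the shift moves from
  \<open>Iset n mu\<close> to \<open>S'\<close>, and these are the nonzero diagonal entries of the Pieri transfer matrix.\<close>

lemma pieri_pairs_fibre_bij:
  assumes n: "n \<ge> 1" and mu: "mu \<in> parts n k" and S': "S' \<in> nsub n (n + k)"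
  shows "bij_betw snd {x \<in> pieri_pairs n k mu. Iset n (fst x) = S'}
    {d \<in> {0, 1}. shift_move (n + k) (d = 1) S' (Iset n mu)}"
proof (rule bij_betw_imageI)
  show "inj_on snd {x \<in> pieri_pairs n k mu. Iset n (fst x) = S'}"
  proof (rule inj_onI)
    fix x y assume x: "x \<in> {x \<in> pieri_pairs n k mu. Iset n (fst x) = S'}"
      and y: "y \<in> {x \<in> pieri_pairs n k mu. Iset n (fst x) = S'}" and "snd x = snd y"
    have "fst x \<in> parts n k" "fst y \<in> parts n k" "Iset n (fst x) = Iset n (fst y)"
      using x y unfolding pieri_pairs_def by auto
    then have "fst x = fst y" by (rule Iset_inj)
    then show "x = y" using \<open>snd x = snd y\<close> by (simp add: prod_eq_iff)
  qed
  show "snd ` {x \<in> pieri_pairs n k mu. Iset n (fst x) = S'} = {d \<in> {0, 1}. shift_move (n + k) (d = 1) S' (Iset n mu)}"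
  proof (intro equalityI subsetI)
    fix d :: nat assume "d \<in> snd ` {x \<in> pieri_pairs n k mu. Iset n (fst x) = S'}"
    then obtain la where "(la, d) \<in> pieri_pairs n k mu" "Iset n la = S'" by force
    then show "d \<in> {d \<in> {0, 1}. shift_move (n + k) (d = 1) S' (Iset n mu)}"
      using pieri_pair_imp_shift_move[OF n mu] unfolding pieri_pairs_def by auto
  next
    fix d :: nat assume "d \<in> {d \<in> {0, 1}. shift_move (n + k) (d = 1) S' (Iset n mu)}"
    then obtain la where "Iset n la = S'" "(la, d) \<in> pieri_pairs n k mu"
      using shift_move_imp_pieri_pair[OF n mu _ S'] by blast
    then show "d \<in> snd ` {x \<in> pieri_pairs n k mu. Iset n (fst x) = S'}" by force
  qed
qed

lemma pieri_sum:
  fixes \<beta> q :: "'a::field"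
  assumes n: "n \<ge> 1" and mu: "mu \<in> parts n k" and S': "S' \<in> nsub n (n + k)"
  shows "(\<Sum>(la, d)\<in>pieri_pairs n k mu. q ^ d * \<beta> ^ skew_size n k la (int d) mu * vvec n la S')
    = transfer (Lpieri \<beta>) False (n + k) False S' (Iset n mu) + q * transfer (Lpieri \<beta>) True (n + k) True S' (Iset n mu)"
proof -
  let ?S = "Iset n mu" and ?P = "pieri_pairs n k mu" and ?c = "card (S' - Iset n mu)"
  let ?T = "{x \<in> ?P. Iset n (fst x) = S'}" and ?D = "{d :: nat \<in> {0, 1}. shift_move (n + k) (d = 1) S' ?S}"
  have "(\<Sum>(la, d)\<in>?P. q ^ d * \<beta> ^ skew_size n k la (int d) mu * vvec n la S')
      = (\<Sum>x\<in>?P. if Iset n (fst x) = S' then q ^ snd x * \<beta> ^ skew_size n k (fst x) (int (snd x)) mu else 0)"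
    by (intro sum.cong refl) (simp add: vvec_def case_prod_beta eq_commute)
  also have "\<dots> = (\<Sum>x\<in>?T. q ^ snd x * \<beta> ^ skew_size n k (fst x) (int (snd x)) mu)"
    by (rule sum.inter_filter[OF pieri_pairs_finite, symmetric])
  also have "\<dots> = (\<Sum>x\<in>?T. q ^ snd x * \<beta> ^ ?c)"
    using pieri_pair_skew_size[OF n mu] by (intro sum.cong) auto
  also have "\<dots> = (\<Sum>d\<in>?D. q ^ d * \<beta> ^ ?c)"
    by (rule sum.reindex_bij_betw[OF pieri_pairs_fibre_bij[OF n mu S'], of "\<lambda>d. q ^ d * \<beta> ^ ?c"])
  also have "\<dots> = (if shift_move (n + k) False S' ?S then \<beta> ^ ?c else 0)
      + q * (if shift_move (n + k) True S' ?S then \<beta> ^ ?c else 0)"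
  proof -
    have "?D = {d \<in> {0}. shift_move (n + k) False S' ?S} \<union> {d \<in> {1}. shift_move (n + k) True S' ?S}" by auto
    then show ?thesis by (simp add: sum.union_disjoint)
  qed
  also have "\<dots> = transfer (Lpieri \<beta>) False (n + k) False S' ?S + q * transfer (Lpieri \<beta>) True (n + k) True S' ?S"
    using transfer_Lpieri_diagonal[of S' "n + k" \<beta>] S' n by (simp add: nsub_def)
  finally show ?thesis .
qed

lemma one_plus_beta_H1_pieri:
  fixes \<beta> q :: "'a::field_char_0" and t :: "nat \<Rightarrow> 'a" and n k :: nat
  assumes n: "n \<ge> 1" and k: "k \<ge> 1" and tne: "\<forall>j\<in>{1..n + k}. 1 + \<beta> * t j \<noteq> 0"
    and mu: "mu \<in> parts n k" and S': "S' \<in> nsub n (n + k)"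
  shows "(\<Sum>S\<in>nsub n (n + k). ((if S' = S then 1 else 0) + \<beta> * Hcoef \<beta> t q n k 1 S' S) * vvec n mu S)
      = PiT \<beta> t (Iset n mu) / PiT \<beta> t {1..n}
        * (\<Sum>(la, d)\<in>pieri_pairs n k mu. q ^ d * \<beta> ^ skew_size n k la (int d) mu * vvec n la S')"
proof -
  have finite: "finite (nsub n (n + k))" by (rule finite_subset[of _ "Pow {1..n + k}"]) (auto simp: nsub_def)
  have "(\<Sum>S\<in>nsub n (n + k). ((if S' = S then 1 else 0) + \<beta> * Hcoef \<beta> t q n k 1 S' S) * vvec n mu S)
      = (if S' = Iset n mu then 1 else 0) + \<beta> * Hcoef \<beta> t q n k 1 S' (Iset n mu)"
  proof -
    have "(\<Sum>S\<in>nsub n (n + k). ((if S' = S then 1 else 0) + \<beta> * Hcoef \<beta> t q n k 1 S' S) * vvec n mu S)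
      = (\<Sum>S\<in>nsub n (n + k). if S = Iset n mu then (if S' = S then 1 else 0) + \<beta> * Hcoef \<beta> t q n k 1 S' S else 0)"
      by (intro sum.cong refl) (simp add: vvec_def)
    then show ?thesis using Iset_nsub[OF mu] by (simp add: sum.delta[OF finite])
  qed
  also have "\<dots> = PiT \<beta> t (Iset n mu) / PiT \<beta> t {1..n}
      * (transfer (Lpieri \<beta>) False (n + k) False S' (Iset n mu) + q * transfer (Lpieri \<beta>) True (n + k) True S' (Iset n mu))"
    by (rule one_plus_beta_H1[OF n k tne Iset_nsub[OF mu] S'])
  finally show ?thesis using pieri_sum[OF n mu S', of q \<beta>] by simp
qed

theorem mainTheorem11:
  fixes \<beta> q :: "'a::field_char_0" and t :: "nat \<Rightarrow> 'a" and n k :: nat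
  assumes "n \<ge> 1" and "k \<ge> 1"
    and "\<forall>j\<in>{1..n + k}. 1 + \<beta> * t j \<noteq> 0"
  shows
    "(\<forall>mu\<in>parts n k. \<forall>S'\<in>nsub n (n + k).
        (\<Sum>S\<in>nsub n (n + k).
            ((if S' = S then 1 else 0) + \<beta> * Hcoef \<beta> t q n k 1 S' S) * vvec n mu S)
      = PiT \<beta> t (Iset n mu) / PiT \<beta> t {1..n}
        * (\<Sum>(la, d)\<in>pieri_pairs n k mu. q ^ d * \<beta> ^ skew_size n k la (int d) mu * vvec n la S'))
   \<and> (\<forall>x. 1 + \<beta> * x \<noteq> 0 \<longrightarrow> (\<forall>S\<in>nsub n (n + k). \<forall>S'\<in>nsub n (n + k).
        (\<Sum>U\<in>nsub n (n + k). Hop \<beta> t q (n + k) x S' U * Eop \<beta> t q (n + k) (onegb \<beta> x) U S)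
      = (\<Prod>j\<in>{1..n}. ominusb \<beta> (t j) x) * (\<Prod>j\<in>{n + 1..n + k}. ominusb \<beta> x (t j))
          * ((if S' = S then 1 else 0) + \<beta> * Hcoef \<beta> t q n k 1 S' S)
        + (if S' = S then q else 0)))"
  using one_plus_beta_H1_pieri[OF assms] Hop_mult_Eop_onegb[OF assms] by simp

end
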